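(* Let $M>2$, $p_M=\frac{M+2}{M-2}$, $m\ge1$, and for $p\in(1,p_M)$ let $v_p$ be the unique solution in $H^1_{0,M}$ of $-(t^{M-1}v')'=t^{M-1}|v|^{p-1}v$ on $(0,1)$, $v'(0)=0$, $v(1)=0$, with exactly $m$ nodal zones and $v_p(0)>0$, and let $f_p(r)=pr^2|v_p(r)|^{p-1}$. For $K>0$ set \[ G_{i,p}(K)=\{r\in(0,1):K\widetilde{\mathcal M}_{i-1,p}^{-1}<r<(K\widetilde{\mathcal M}_{i,p})^{-1}\}\ (i=1,\dots,m-1),\qquad G_{m,p}(K)=\{r\in(0,1):K\widetilde{\mathcal M}_{m-1,p}^{-1}<r<1\}. \] Then for every $\varepsilon>0$ there exist $\bar K=\bar K(\varepsilon)>0$ and $\bar p=\bar p(\varepsilon,\bar K)<p_M$ such that \[ \max\Big\{f_p(r): r\in\bigcup_{i=1}^m G_{i,p}(K)\Big\}<\varepsilon \] for every $K>\bar K$ and every $p\in(\bar p,p_M)$.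
   Context: $H^1_{0,M}$: measurable $v$ on $(0,1)$ with $\int_0^1t^{M-1}(v^2+|v'|^2)<\infty$, $v(1)=0$. $0=t_{0,p}<\dots<t_{m,p}=1$ are $0$ and the zeros of $v_p$, $\mathcal M_{i,p}=\max_{[t_{i,p},t_{i+1,p}]}|v_p|$, $\widetilde{\mathcal M}_{i,p}=\mathcal M_{i,p}^{(p-1)/2}$. *)

theory Defs
  imports "HOL-Analysis.Analysis"
begin

definition pM :: "real \<Rightarrow> real" where
  "pM M = (M + 2) / (M - 2)"

definition in_H10M :: "real \<Rightarrow> (real \<Rightarrow> real) \<Rightarrow> bool" where
  "in_H10M M v \<longleftrightarrow>
     (\<lambda>t. t powr (M - 1) * ((v t)\<^sup>2 + (deriv v t)\<^sup>2)) integrable_on {0..1} \<and> v 1 = 0"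

definition radial_sol :: "real \<Rightarrow> real \<Rightarrow> (real \<Rightarrow> real) \<Rightarrow> bool" where
  "radial_sol M p v \<longleftrightarrow>
     in_H10M M v \<and>
     continuous_on {0..1} v \<and>
     (\<forall>t\<in>{0<..<1}. v differentiable (at t)) \<and>
     (\<forall>t\<in>{0<..<1}. ((\<lambda>s. s powr (M - 1) * deriv v s) has_real_derivative
          (- (t powr (M - 1) * \<bar>v t\<bar> powr (p - 1) * v t))) (at t)) \<and>
     (v has_real_derivative 0) (at 0 within {0..1}) \<and>
     v 1 = 0"

definition inner_zeros :: "(real \<Rightarrow> real) \<Rightarrow> real set" where
  "inner_zeros v = {t \<in> {0<..<1}. v t = 0}"

text \<open>v has exactly m nodal zones in [0,1): exactly m-1 zeros in (0,1).\<close>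
definition nodal_zones :: "(real \<Rightarrow> real) \<Rightarrow> nat \<Rightarrow> bool" where
  "nodal_zones v m \<longleftrightarrow> finite (inner_zeros v) \<and> card (inner_zeros v) + 1 = m"

definition tz :: "(real \<Rightarrow> real) \<Rightarrow> nat \<Rightarrow> nat \<Rightarrow> real" where
  "tz v m i = (if i = 0 then 0 else if i \<ge> m then 1
               else sorted_list_of_set (inner_zeros v) ! (i - 1))"

definition Mloc :: "(real \<Rightarrow> real) \<Rightarrow> nat \<Rightarrow> nat \<Rightarrow> real" where
  "Mloc v m i = (SUP s\<in>{tz v m i .. tz v m (Suc i)}. \<bar>v s\<bar>)"

definition Mtil :: "real \<Rightarrow> (real \<Rightarrow> real) \<Rightarrow> nat \<Rightarrow> nat \<Rightarrow> real" where
  "Mtil p v m i = Mloc v m i powr ((p - 1) / 2)"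

definition Gset :: "real \<Rightarrow> (real \<Rightarrow> real) \<Rightarrow> nat \<Rightarrow> real \<Rightarrow> nat \<Rightarrow> real set" where
  "Gset p v m K i =
     (if i < m then {r \<in> {0<..<1}. K / Mtil p v m (i - 1) < r \<and> r < 1 / (K * Mtil p v m i)}
      else {r \<in> {0<..<1}. K / Mtil p v m (m - 1) < r \<and> r < 1})"

end

(*
  With beta = 2 / (p - 1), the Emden-Fowler transform w(tau) = e^(beta tau) v_p(e^tau) solves the
  autonomous equation w'' = - a w' + b w - |w|^(p-1) w, where a = M - 2 - 2 beta < 0 tends to 0
  as p -> p_M, and r^2 |v_p(r)|^(p-1) = |w(ln r)|^(p-1).  Its energy
  F = w'^2/2 - b w^2/2 + |w|^(p+1)/(p+1) is nondecreasing and vanishes at tau = -infinity.  Over a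
  nodal zone F grows by at most 2 |a| sup|w| sup|w'|, and both suprema are controlled by F itself,
  so F <= 4 once |a| is small.

  The radial energy v'^2/2 + |v|^(p+1)/(p+1) decreases in r, so after the peak rho_j of the j-th
  zone |v'| <= M_j Mtil_j.  Hence the maxima M_j decrease, zone j+1 starts beyond 1/Mtil_j, and
  F <= 4 at the peak gives rho_j Mtil_j = O(1).  A point r of G_{i,p}(K) either lies in zone i,
  where f_p(r) <= p (r Mtil_i)^2 < p/K^2, or lies in a zone j with r Mtil_j > K.  In the latter
  case, if f_p(r) >= p gamma then |w| is bounded below at ln r and at ln s, s = rho_j + 1/(2 Mtil_j),
  hence on the whole arc between them; but a positive arc above a fixed level lasts a bounded time
  D, because below a threshold |w'| is bounded away from 0 by the energy and above it w'' < 0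
  uniformly.  So r <= s e^D = O(1/Mtil_j), which is impossible for K large.
*)
theory Submission
  imports Defs
begin

lemma abs_powr_add_2: "\<bar>x::real\<bar> powr (q + 2) = \<bar>x\<bar> powr q * x\<^sup>2"
proof (cases "x = 0")
  case False
  then have "\<bar>x\<bar> powr (q + 2) = \<bar>x\<bar> powr q * \<bar>x\<bar> powr 2" by (simp add: powr_add)
  also have "\<bar>x\<bar> powr 2 = x\<^sup>2" using False by (simp add: powr_numeral)
  finally show ?thesis .
qed simp

lemma has_real_derivative_abs_powr_at_0:
  fixes q :: real
  assumes q: "q > 0"
  shows "((\<lambda>x. \<bar>x\<bar> powr (q + 2)) has_real_derivative 0) (at 0)"
proof -
  have "((\<lambda>h. \<bar>h\<bar> powr (q + 1)) \<longlongrightarrow> \<bar>0::real\<bar> powr (q + 1)) (at (0::real))"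
    by (intro tendsto_intros) (use q in auto)
  then have lim: "((\<lambda>h. \<bar>h\<bar> powr (q + 1)) \<longlongrightarrow> 0) (at (0::real))" by simp
  have quotient: "norm (\<bar>h\<bar> powr (q + 2) / h) \<le> \<bar>h\<bar> powr (q + 1)" for h :: real
  proof (cases "h = 0")
    case False
    have "\<bar>h\<bar> powr (q + 2) = \<bar>h\<bar> powr ((q + 1) + 1)" by (simp add: algebra_simps)
    also have "\<dots> = \<bar>h\<bar> powr (q + 1) * \<bar>h\<bar>" using False by (simp only: powr_add) simp
    finally show ?thesis using False q by (simp add: abs_divide)
  qed simp
  have "((\<lambda>h. \<bar>h\<bar> powr (q + 2) / h) \<longlongrightarrow> 0) (at 0)"
    by (rule Lim_null_comparison[OF always_eventually lim]) (use quotient in auto)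
  then show ?thesis using q by (simp add: DERIV_def)
qed

lemma has_real_derivative_abs_powr:
  fixes q x :: real
  assumes q: "q > 0"
  shows "((\<lambda>x. \<bar>x\<bar> powr (q + 2)) has_real_derivative ((q + 2) * \<bar>x\<bar> powr q * x)) (at x)"
proof -
  consider "x = 0" | "x > 0" | "x < 0" by linarith
  then show ?thesis
  proof cases
    case 1
    then show ?thesis using has_real_derivative_abs_powr_at_0[OF q] by simp
  next
    case 2
    have d: "((\<lambda>x. x powr (q + 2)) has_real_derivative ((q + 2) * x powr (q + 2 - 1))) (at x)"
      using 2 by (rule has_real_derivative_powr)
    have e: "(q + 2) * x powr (q + 2 - 1) = (q + 2) * \<bar>x\<bar> powr q * x"
      using 2 by (simp add: powr_add add.assoc)
    show ?thesis
      by (rule has_field_derivative_transform_within_open[where S="{0<..}"]) (use d[unfolded e] 2 in auto)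
  next
    case 3
    have d: "((\<lambda>x. (- x) powr (q + 2)) has_real_derivative ((q + 2) * (- x) powr (q + 2 - 1) * (- 1))) (at x)"
      using 3 by (auto intro!: derivative_eq_intros)
    have e: "(q + 2) * (- x) powr (q + 2 - 1) * (- 1) = (q + 2) * \<bar>x\<bar> powr q * x"
      using 3 by (simp add: powr_add add.assoc)
    show ?thesis
      by (rule has_field_derivative_transform_within_open[where S="{..<0}"]) (use d[unfolded e] 3 in auto)
  qed
qed

lemma mono_on_has_real_derivative_nonneg:
  fixes f :: "real \<Rightarrow> real"
  assumes mono: "mono_on {A..B} f" and "A < B" and x: "x \<in> {A..B}"
    and f': "(f has_real_derivative D) (at x)"
  shows "D \<ge> 0"
proof (rule ccontr)
  assume "\<not> D \<ge> 0"
  then have D: "D < 0" by simp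
  show False
  proof (cases "x < B")
    case True
    obtain d where d: "d > 0" "\<And>h. h > 0 \<Longrightarrow> h < d \<Longrightarrow> f (x + h) < f x"
      using DERIV_neg_dec_right[OF f' D] by auto
    define h where "h = min (d / 2) (B - x)"
    have "h > 0" "h < d" using d True by (auto simp: h_def)
    then have "f (x + h) < f x" using d by auto
    moreover have "f x \<le> f (x + h)"
      using monotone_onD[OF mono] x \<open>h > 0\<close> by (auto simp: h_def)
    ultimately show False by simp
  next
    case False
    obtain d where d: "d > 0" "\<And>h. h > 0 \<Longrightarrow> h < d \<Longrightarrow> f x < f (x - h)"
      using DERIV_neg_dec_left[OF f' D] by auto
    define h where "h = min (d / 2) (B - A)"
    have "h > 0" "h < d" using d \<open>A < B\<close> by (auto simp: h_def)
    then have "f x < f (x - h)" using d by auto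
    moreover have "f (x - h) \<le> f x"
      using monotone_onD[OF mono] x False \<open>h > 0\<close> by (auto simp: h_def)
    ultimately show False by simp
  qed
qed

lemma antimono_on_has_real_derivative_nonpos:
  fixes f :: "real \<Rightarrow> real"
  assumes "antimono_on {A..B} f" and "A < B" and "x \<in> {A..B}"
    and "(f has_real_derivative D) (at x)"
  shows "D \<le> 0"
proof -
  have "mono_on {A..B} (\<lambda>t. - f t)"
    using assms(1) by (auto intro!: monotone_onI dest: monotone_onD)
  then have "- D \<ge> 0"
    by (rule mono_on_has_real_derivative_nonneg) (use assms in \<open>auto intro!: derivative_eq_intros\<close>)
  then show ?thesis by simp
qed

lemma increment_ge_if_deriv_ge:
  fixes f f' :: "real \<Rightarrow> real"
  assumes "A \<le> B" and "\<And>t. t \<in> {A..B} \<Longrightarrow> (f has_real_derivative f' t) (at t)"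
    and "\<And>t. t \<in> {A..B} \<Longrightarrow> f' t \<ge> c"
  shows "f B - f A \<ge> c * (B - A)"
proof -
  have "(\<lambda>t. f t - c * t) A \<le> (\<lambda>t. f t - c * t) B"
    by (rule deriv_nonneg_imp_mono[where g'="\<lambda>t. f' t - c"])
       (use assms in \<open>auto intro!: derivative_eq_intros\<close>)
  then show ?thesis by (simp add: algebra_simps)
qed

lemma increment_le_if_deriv_le:
  fixes f f' :: "real \<Rightarrow> real"
  assumes "A \<le> B" and "\<And>t. t \<in> {A..B} \<Longrightarrow> (f has_real_derivative f' t) (at t)"
    and "\<And>t. t \<in> {A..B} \<Longrightarrow> f' t \<le> c"
  shows "f B - f A \<le> c * (B - A)"
proof -
  have "(\<lambda>t. c * t - f t) A \<le> (\<lambda>t. c * t - f t) B"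
    by (rule deriv_nonneg_imp_mono[where g'="\<lambda>t. c - f' t"])
       (use assms in \<open>auto intro!: derivative_eq_intros\<close>)
  then show ?thesis by (simp add: algebra_simps)
qed

section \<open>The autonomous Emden--Fowler equation\<close>

definition ef_energy :: "real \<Rightarrow> real \<Rightarrow> real \<Rightarrow> real \<Rightarrow> real" where
  "ef_energy b q y y' = y'\<^sup>2 / 2 - b * y\<^sup>2 / 2 + \<bar>y\<bar> powr (q + 2) / (q + 2)"

lemma ef_energy_uminus: "ef_energy b q (- y) (- y') = ef_energy b q y y'"
  by (simp add: ef_energy_def)

lemma ef_energy_ge: "q > -2 \<Longrightarrow> ef_energy b q y y' \<ge> - b * y\<^sup>2 / 2"
  unfolding ef_energy_def by (auto intro!: add_nonneg_nonneg divide_nonneg_pos)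

lemma ef_energy_derivative_sq_le:
  "ef_energy b q y y' \<le> \<Phi> \<Longrightarrow> q > -2 \<Longrightarrow> y'\<^sup>2 \<le> 2 * \<Phi> + b * y\<^sup>2"
proof -
  assume "ef_energy b q y y' \<le> \<Phi>" "q > -2"
  moreover have "\<bar>y\<bar> powr (q + 2) / (q + 2) \<ge> 0" using \<open>q > -2\<close> by simp
  ultimately show ?thesis unfolding ef_energy_def by linarith
qed

lemma sq_le_of_energy_le:
  fixes q q\<^sub>0 Q b b\<^sub>1 y y' \<Phi> :: real
  assumes q: "0 < q\<^sub>0" "q\<^sub>0 \<le> q" "q \<le> Q" and b: "0 < b" "b \<le> b\<^sub>1"
    and F: "ef_energy b q y y' \<le> \<Phi>" and Phi: "\<Phi> \<ge> 0"
  shows "y\<^sup>2 \<le> (max 1 ((Q + 2) * b\<^sub>1)) powr (2 / q\<^sub>0) + 2 * (Q + 2) * \<Phi>"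
proof -
  define X where "X = \<bar>y\<bar>"
  define C where "C = (max 1 ((Q + 2) * b\<^sub>1)) powr (2 / q\<^sub>0)"
  have q0: "q > 0" using q by linarith
  have C1: "C \<ge> 1" unfolding C_def using q by (intro ge_one_powr_ge_zero) auto
  have X0: "X \<ge> 0" by (simp add: X_def)
  have ysq: "y\<^sup>2 = X powr 2" by (simp add: X_def powr_numeral)
  have main: "X powr q * y\<^sup>2 / (q + 2) - b * y\<^sup>2 / 2 \<le> \<Phi>"
  proof -
    have "(y')\<^sup>2 / 2 \<ge> 0" by simp
    moreover have "\<bar>y\<bar> powr (q + 2) / (q + 2) = \<bar>y\<bar> powr q * y\<^sup>2 / (q + 2)" by (simp add: abs_powr_add_2)
    ultimately show ?thesis using F unfolding ef_energy_def X_def by linarith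
  qed
  consider "X \<le> 1" | "X powr q \<le> (q + 2) * b" | "X > 1" "X powr q > (q + 2) * b" by linarith
  then have "y\<^sup>2 \<le> C + 2 * (Q + 2) * \<Phi>"
  proof cases
    case 1
    then have "y\<^sup>2 \<le> 1" using X0 unfolding ysq by (simp add: power_le_one)
    then show ?thesis using C1 Phi q by (smt (verit) mult_nonneg_nonneg)
  next
    case 2
    have "X powr 2 = (X powr q) powr (2 / q)" using q0 X0 by (simp add: powr_powr)
    also have "\<dots> \<le> ((q + 2) * b) powr (2 / q)" using 2 q0 by (intro powr_mono2) auto
    also have "\<dots> \<le> (max 1 ((Q + 2) * b\<^sub>1)) powr (2 / q)"
    proof (intro powr_mono2)
      have "(q + 2) * b \<le> (Q + 2) * b\<^sub>1" using q b by (intro mult_mono) auto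
      then show "(q + 2) * b \<le> max 1 ((Q + 2) * b\<^sub>1)" by simp
    qed (use q0 b in auto)
    also have "\<dots> \<le> C" unfolding C_def using q q0 by (intro powr_mono) (auto simp: divide_left_mono)
    finally show ?thesis using ysq Phi q by (smt (verit) mult_nonneg_nonneg)
  next
    case 3
    have Xq1: "X powr q \<ge> 1" using 3 q0 by (intro ge_one_powr_ge_zero) auto
    have "b < X powr q / (q + 2)" using 3 q0 by (simp add: field_simps)
    then have "b * y\<^sup>2 / 2 \<le> X powr q / (q + 2) * y\<^sup>2 / 2" by (intro divide_right_mono mult_right_mono) auto
    moreover have "X powr q / (q + 2) * y\<^sup>2 / 2 = (X powr q * y\<^sup>2 / (q + 2)) / 2" by simp
    ultimately have "(X powr q * y\<^sup>2 / (q + 2)) / 2 \<le> \<Phi>" using main by linarith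
    moreover have "X powr q * y\<^sup>2 / (2 * (q + 2)) = (X powr q * y\<^sup>2 / (q + 2)) / 2" by simp
    ultimately have "X powr q * y\<^sup>2 / (2 * (q + 2)) \<le> \<Phi>" by (simp only:)
    moreover have "y\<^sup>2 / (2 * (q + 2)) \<le> X powr q * y\<^sup>2 / (2 * (q + 2))"
      using Xq1 q0 by (intro divide_right_mono) (auto simp: mult_le_cancel_right1)
    ultimately have "y\<^sup>2 / (2 * (q + 2)) \<le> \<Phi>" by linarith
    then have "y\<^sup>2 \<le> 2 * (q + 2) * \<Phi>" using q0 by (simp add: field_simps)
    also have "\<dots> \<le> 2 * (Q + 2) * \<Phi>" using q Phi by (intro mult_right_mono) auto
    finally show ?thesis using C1 by linarith
  qed
  then show ?thesis unfolding C_def .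
qed

locale emden_fowler =
  fixes a b q :: real and y y' :: "real \<Rightarrow> real" and I :: "real set"
  assumes q_pos: "q > 0" and b_pos: "b > 0" and a_nonpos: "a \<le> 0"
    and open_I: "open I"
    and y_deriv: "\<And>t. t \<in> I \<Longrightarrow> (y has_real_derivative y' t) (at t)"
    and y'_deriv: "\<And>t. t \<in> I \<Longrightarrow>
          (y' has_real_derivative (- a * y' t + b * y t - \<bar>y t\<bar> powr q * y t)) (at t)"
begin

lemma uminus: "emden_fowler a b q (\<lambda>t. - y t) (\<lambda>t. - y' t) I"
proof
  fix t assume t: "t \<in> I"
  show "((\<lambda>t. - y t) has_real_derivative - y' t) (at t)"
    using y_deriv[OF t] by (auto intro!: derivative_eq_intros)
  show "((\<lambda>t. - y' t) has_real_derivative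
      - a * - y' t + b * - y t - \<bar>- y t\<bar> powr q * - y t) (at t)"
    using y'_deriv[OF t] by (auto intro!: derivative_eq_intros simp: algebra_simps)
qed (use q_pos b_pos a_nonpos open_I in auto)

lemma energy_has_derivative:
  assumes t: "t \<in> I"
  shows "((\<lambda>t. ef_energy b q (y t) (y' t)) has_real_derivative (- a * (y' t)\<^sup>2)) (at t)"
proof -
  define y'' where "y'' = - a * y' t + b * y t - \<bar>y t\<bar> powr q * y t"
  have "((\<lambda>t. \<bar>y t\<bar> powr (q + 2)) has_real_derivative ((q + 2) * \<bar>y t\<bar> powr q * y t) * y' t) (at t)"
    using DERIV_chain2[OF has_real_derivative_abs_powr[OF q_pos] y_deriv[OF t]] .
  then have "((\<lambda>t. (y' t)\<^sup>2 / 2 - b * (y t)\<^sup>2 / 2 + \<bar>y t\<bar> powr (q + 2) / (q + 2))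
      has_real_derivative y' t * y'' - b * y t * y' t + ((q + 2) * \<bar>y t\<bar> powr q * y t) * y' t / (q + 2))
      (at t)"
    using y_deriv[OF t] y'_deriv[OF t] unfolding y''_def[symmetric]
    by (intro DERIV_add DERIV_diff DERIV_cdivide) (auto intro!: derivative_eq_intros)
  moreover have "y' t * y'' - b * y t * y' t + ((q + 2) * \<bar>y t\<bar> powr q * y t) * y' t / (q + 2)
      = - a * (y' t)\<^sup>2"
    using q_pos unfolding y''_def by (simp add: field_simps power2_eq_square)
  ultimately show ?thesis unfolding ef_energy_def by simp
qed

lemma energy_mono:
  assumes "A \<le> B" "{A..B} \<subseteq> I"
  shows "ef_energy b q (y A) (y' A) \<le> ef_energy b q (y B) (y' B)"
  by (rule deriv_nonneg_imp_mono[where g="\<lambda>t. ef_energy b q (y t) (y' t)" and g'="\<lambda>t. - a * (y' t)\<^sup>2"])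
     (use assms energy_has_derivative a_nonpos in \<open>auto intro: mult_nonpos_nonneg\<close>)

lemma continuous_on_y: "S \<subseteq> I \<Longrightarrow> continuous_on S y"
  using y_deriv by (meson DERIV_continuous continuous_at_imp_continuous_on subsetD)

lemma energy_increment_le_if_mono_on:
  assumes AB: "A \<le> B" "{A..B} \<subseteq> I" and mono: "mono_on {A..B} y"
    and S: "\<And>t. t \<in> {A..B} \<Longrightarrow> y' t \<le> S"
  shows "ef_energy b q (y B) (y' B) - ef_energy b q (y A) (y' A) \<le> - a * S * (y B - y A)"
proof (cases "A = B")
  case False
  let ?g = "\<lambda>t. - a * S * y t - ef_energy b q (y t) (y' t)"
  have "?g A \<le> ?g B"
  proof (rule deriv_nonneg_imp_mono[where g="?g" and g'="\<lambda>t. - a * S * y' t - (- a) * (y' t)\<^sup>2"])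
    fix t assume t: "t \<in> {A..B}"
    then have tI: "t \<in> I" using AB by auto
    show "(?g has_real_derivative - a * S * y' t - (- a) * (y' t)\<^sup>2) (at t)"
      by (intro DERIV_diff DERIV_cmult y_deriv[OF tI] energy_has_derivative[OF tI])
    have "y' t \<ge> 0"
      using mono_on_has_real_derivative_nonneg[OF mono _ t y_deriv[OF tI]] AB False by simp
    then have "(y' t)\<^sup>2 \<le> S * y' t" using S[OF t] by (simp add: power2_eq_square mult_right_mono)
    then show "0 \<le> - a * S * y' t - (- a) * (y' t)\<^sup>2"
      using mult_left_mono[OF _ a_nonpos[folded neg_0_le_iff_le]] by (simp add: mult.assoc)
  qed (use AB in auto)
  then show ?thesis by (simp add: algebra_simps)
qed simp

lemma energy_increment_le_if_antimono_on:
  assumes AB: "A \<le> B" "{A..B} \<subseteq> I" and mono: "antimono_on {A..B} y"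
    and S: "\<And>t. t \<in> {A..B} \<Longrightarrow> - y' t \<le> S"
  shows "ef_energy b q (y B) (y' B) - ef_energy b q (y A) (y' A) \<le> - a * S * (y A - y B)"
proof -
  interpret neg: emden_fowler a b q "\<lambda>t. - y t" "\<lambda>t. - y' t" I by (rule uminus)
  have "mono_on {A..B} (\<lambda>t. - y t)"
    using mono by (auto intro!: monotone_onI dest: monotone_onD)
  from neg.energy_increment_le_if_mono_on[OF AB this S]
  show ?thesis by (simp add: ef_energy_uminus)
qed

end

locale emden_fowler_nonneg_energy = emden_fowler +
  assumes energy_nonneg: "\<And>t. t \<in> I \<Longrightarrow> ef_energy b q (y t) (y' t) \<ge> 0"
begin

lemma uminus_nonneg_energy: "emden_fowler_nonneg_energy a b q (\<lambda>t. - y t) (\<lambda>t. - y' t) I"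
  by (intro emden_fowler_nonneg_energy.intro uminus emden_fowler_nonneg_energy_axioms.intro)
     (simp add: ef_energy_uminus energy_nonneg)

lemma critical_value_powr_ge:
  assumes t: "t \<in> I" and pos: "y t > 0" and crit: "y' t = 0"
  shows "y t powr q \<ge> b * (q + 2) / 2"
proof -
  have "b * (y t)\<^sup>2 / 2 \<le> y t powr q * (y t)\<^sup>2 / (q + 2)"
    using energy_nonneg[OF t] crit pos abs_powr_add_2[of "y t" q] by (simp add: ef_energy_def)
  then have "b * (y t)\<^sup>2 \<le> (2 * y t powr q / (q + 2)) * (y t)\<^sup>2" using q_pos by (simp add: field_simps)
  then have "b \<le> 2 * y t powr q / (q + 2)" using pos by (meson mult_le_cancel_right_pos zero_less_power)
  then show ?thesis using q_pos by (simp add: field_simps)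
qed

text \<open>Positive critical points are strict local maxima: the energy bound forces \<open>y'' < 0\<close> there.\<close>

lemma decreasing_right_of_positive_critical_point:
  assumes t: "t \<in> I" and pos: "y t > 0" and crit: "y' t = 0"
  obtains d where "d > 0" "\<And>h. 0 < h \<Longrightarrow> h < d \<Longrightarrow> y (t + h) < y t"
proof -
  have "b * (q + 2) / 2 > b" using b_pos q_pos by (simp add: field_simps)
  then have "y t powr q > b" using critical_value_powr_ge[OF t pos crit] by linarith
  then have "- a * y' t + b * y t - \<bar>y t\<bar> powr q * y t < 0"
    using crit pos by (simp add: mult_strict_right_mono algebra_simps)
  then obtain d1 where d1: "d1 > 0" "\<And>h. h > 0 \<Longrightarrow> h < d1 \<Longrightarrow> y' (t + h) < y' t"
    using DERIV_neg_dec_right[OF y'_deriv[OF t]] by auto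
  obtain d2 where d2: "d2 > 0" "ball t d2 \<subseteq> I" using open_I t open_contains_ball by blast
  have "y (t + h) < y t" if h: "0 < h" "h < min d1 d2" for h
  proof -
    have inI: "x \<in> I" if "t \<le> x" "x \<le> t + h" for x
      using d2(2) that h by (auto simp: dist_real_def)
    obtain z where z: "t < z" "z < t + h" "y (t + h) - y t = h * y' z"
      using MVT2[of t "t + h" y y'] h y_deriv inI by force
    have "y' z < 0" using d1(2)[of "z - t"] z h crit by simp
    then have "h * y' z < 0" using mult_pos_neg[OF h(1)] by simp
    then show ?thesis using z by simp
  qed
  then show ?thesis using that[of "min d1 d2"] d1 d2 by simp
qed

lemma positive_arc_ge_min:
  assumes AB: "{A..B} \<subseteq> I" and pos: "\<And>t. A < t \<Longrightarrow> t < B \<Longrightarrow> y t > 0"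
    and st: "A \<le> s" "s \<le> t" "t \<le> u" "u \<le> B"
  shows "y t \<ge> min (y s) (y u)"
proof (rule ccontr)
  assume "\<not> ?thesis"
  then have lt: "y t < y s" "y t < y u" by auto
  have "continuous_on {s..u} y" using AB st by (intro continuous_on_y) auto
  then obtain c where c: "c \<in> {s..u}" "\<And>x. x \<in> {s..u} \<Longrightarrow> y c \<le> y x"
    using continuous_attains_inf[of "{s..u}" y] st by auto
  have "y c \<le> y t" using c st by auto
  then have cin: "s < c" "c < u" using c lt by (auto simp: order.order_iff_strict)
  have cI: "c \<in> I" using AB cin st by auto
  have "y' c = 0"
  proof (rule DERIV_local_min[OF y_deriv[OF cI]])
    show "0 < min (c - s) (u - c)" using cin by simp
    show "\<forall>x. \<bar>c - x\<bar> < min (c - s) (u - c) \<longrightarrow> y c \<le> y x"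
      using c(2) by (auto simp: abs_less_iff)
  qed
  then obtain d where d: "d > 0" "\<And>h. 0 < h \<Longrightarrow> h < d \<Longrightarrow> y (c + h) < y c"
    using decreasing_right_of_positive_critical_point[OF cI] pos cin st by (metis le_less_trans less_le_trans)
  define h where "h = min (d / 2) ((u - c) / 2)"
  have "0 < h" "h < d" using d cin by (auto simp: h_def)
  then have "y (c + h) < y c" using d by auto
  moreover have "c + h \<in> {s..u}" using cin \<open>0 < h\<close> unfolding h_def min_def by (auto simp: field_simps)
  ultimately show False using c(2) by fastforce
qed

lemma positive_arc_unimodal:
  assumes AB: "A \<le> B" "{A..B} \<subseteq> I" and pos: "\<And>t. A < t \<Longrightarrow> t < B \<Longrightarrow> y t > 0"
  obtains P where "P \<in> {A..B}" "\<And>t. t \<in> {A..B} \<Longrightarrow> y t \<le> y P"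
    and "mono_on {A..P} y" and "antimono_on {P..B} y"
proof -
  obtain P where P: "P \<in> {A..B}" "\<And>t. t \<in> {A..B} \<Longrightarrow> y t \<le> y P"
    using continuous_attains_sup[of "{A..B}" y] continuous_on_y[OF AB(2)] AB(1) by auto
  have "mono_on {A..P} y"
  proof (intro monotone_onI)
    fix s t assume "s \<in> {A..P}" "t \<in> {A..P}" "s \<le> t"
    then show "y s \<le> y t" using positive_arc_ge_min[OF AB(2) pos, of s t P] P by force
  qed
  moreover have "antimono_on {P..B} y"
  proof (intro monotone_onI)
    fix s t assume "s \<in> {P..B}" "t \<in> {P..B}" "s \<le> t"
    then show "y t \<le> y s" using positive_arc_ge_min[OF AB(2) pos, of P s t] P by force
  qed
  ultimately show ?thesis using that P by blast
qed

lemma energy_increment_positive_arc: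
  assumes AB: "A \<le> B" "{A..B} \<subseteq> I" and pos: "\<And>t. A < t \<Longrightarrow> t < B \<Longrightarrow> y t > 0"
    and nonneg: "y A \<ge> 0" "y B \<ge> 0" and W: "\<And>t. t \<in> {A..B} \<Longrightarrow> y t \<le> W"
    and S: "\<And>t. t \<in> {A..B} \<Longrightarrow> \<bar>y' t\<bar> \<le> S"
  shows "ef_energy b q (y B) (y' B) - ef_energy b q (y A) (y' A) \<le> 2 * (- a) * S * W"
proof -
  obtain P where P: "P \<in> {A..B}" "\<And>t. t \<in> {A..B} \<Longrightarrow> y t \<le> y P"
    and up: "mono_on {A..P} y" and down: "antimono_on {P..B} y"
    using positive_arc_unimodal[OF AB pos] by blast
  have aS: "- a * S \<ge> 0" using S[of A] AB a_nonpos by (simp add: mult_nonpos_nonneg)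
  have "ef_energy b q (y P) (y' P) - ef_energy b q (y A) (y' A) \<le> - a * S * (y P - y A)"
    by (rule energy_increment_le_if_mono_on[OF _ _ up]) (use P AB S in \<open>auto simp: abs_le_iff\<close>)
  also have "\<dots> \<le> - a * S * W" using W[OF P(1)] nonneg aS by (intro mult_left_mono) auto
  finally have rise: "ef_energy b q (y P) (y' P) - ef_energy b q (y A) (y' A) \<le> - a * S * W" .
  have "ef_energy b q (y B) (y' B) - ef_energy b q (y P) (y' P) \<le> - a * S * (y P - y B)"
    by (rule energy_increment_le_if_antimono_on[OF _ _ down]) (use P AB S in \<open>auto simp: abs_le_iff\<close>)
  also have "\<dots> \<le> - a * S * W" using W[OF P(1)] nonneg aS by (intro mult_left_mono) auto
  finally show ?thesis using rise by simp
qed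

end

text \<open>Above the level \<open>ef_level b q\<close> the nonlinearity \<open>\<bar>y\<bar>\<^sup>q\<close> exceeds \<open>b\<close> by \<open>b q / 4\<close>.\<close>

definition ef_level :: "real \<Rightarrow> real \<Rightarrow> real" where
  "ef_level b q = (b * (1 + q / 4)) powr (1 / q)"

context emden_fowler_nonneg_energy
begin

lemma ef_level_pos: "ef_level b q > 0"
  using b_pos q_pos by (simp add: ef_level_def)

lemma ef_level_powr: "ef_level b q powr q = b * (1 + q / 4)"
  using b_pos q_pos by (simp add: ef_level_def powr_powr)

text \<open>A positive arc staying above a level \<open>\<eta>\<close>, on which the damping is small compared with
  \<open>\<eta>\<close>, lasts a bounded time: below \<open>ef_level b q\<close> the energy bound keeps \<open>\<bar>y'\<bar>\<close> away from zero,
  above it \<open>y'' \<le> - c\<^sub>0 / 2\<close>.\<close>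

context
  fixes A B \<eta> S c\<^sub>0 h :: real
  assumes arc: "A \<le> B" "{A..B} \<subseteq> I"
    and above: "\<eta> > 0" "\<And>t. t \<in> {A..B} \<Longrightarrow> y t \<ge> \<eta>"
    and speed: "\<And>t. t \<in> {A..B} \<Longrightarrow> \<bar>y' t\<bar> \<le> S"
    and c\<^sub>0: "c\<^sub>0 > 0" "c\<^sub>0 \<le> \<eta> * b * q / 4" "- a * S \<le> c\<^sub>0 / 2"
    and h: "h > 0" "h \<le> \<eta>\<^sup>2 * b * q / (2 * (q + 2))"
begin

lemma speed_below_level:
  assumes t: "t \<in> {A..B}" "y t < ef_level b q"
  shows "\<bar>y' t\<bar> \<ge> sqrt h"
proof -
  have yt: "y t \<ge> \<eta>" using above t by auto
  have ytq: "y t powr q < b * (1 + q / 4)"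
    using powr_less_mono2[OF q_pos _ t(2)] yt above ef_level_powr by simp
  have "(y' t)\<^sup>2 / 2 \<ge> (y t)\<^sup>2 * (b / 2 - y t powr q / (q + 2))"
    using energy_nonneg[of t] t arc abs_powr_add_2[of "y t" q] yt above
    unfolding ef_energy_def by (auto simp: algebra_simps)
  moreover have "b / 2 - y t powr q / (q + 2) \<ge> b * q / (4 * (q + 2))"
  proof -
    have "y t powr q / (q + 2) \<le> b * (1 + q / 4) / (q + 2)"
      using ytq q_pos by (simp add: divide_right_mono)
    moreover have "b / 2 - b * (1 + q / 4) / (q + 2) = b * q / (4 * (q + 2))"
      using q_pos by (simp add: field_simps)
    ultimately show ?thesis by linarith
  qed
  moreover have "(y t)\<^sup>2 \<ge> \<eta>\<^sup>2" using yt above by (simp add: power_mono)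
  ultimately have "(y' t)\<^sup>2 / 2 \<ge> \<eta>\<^sup>2 * (b * q / (4 * (q + 2)))"
    using b_pos q_pos by (smt (verit) mult_mono zero_le_power2 divide_nonneg_pos mult_nonneg_nonneg)
  then have "(y' t)\<^sup>2 \<ge> \<eta>\<^sup>2 * b * q / (2 * (q + 2))" using q_pos by (simp add: field_simps)
  then have "(y' t)\<^sup>2 \<ge> h" using h by linarith
  then show ?thesis using real_sqrt_le_mono by fastforce
qed

lemma acceleration_above_level:
  assumes t: "t \<in> {A..B}" "y t \<ge> ef_level b q"
  shows "- a * y' t + b * y t - \<bar>y t\<bar> powr q * y t \<le> - c\<^sub>0 / 2"
proof -
  have yt: "y t \<ge> \<eta>" using above t by auto
  have "y t powr q \<ge> b * (1 + q / 4)"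
    using powr_mono2[of q "ef_level b q" "y t"] q_pos ef_level_pos t ef_level_powr by simp
  then have "b - y t powr q \<le> - (b * q / 4)" by (simp add: algebra_simps)
  then have "y t * (b - y t powr q) \<le> y t * (- (b * q / 4))" using yt above by (intro mult_left_mono) auto
  also have "\<dots> \<le> \<eta> * (- (b * q / 4))" using yt b_pos q_pos by (intro mult_right_mono_neg) auto
  finally have "b * y t - \<bar>y t\<bar> powr q * y t \<le> - (\<eta> * b * q / 4)"
    using yt above by (simp add: algebra_simps)
  moreover have "- a * y' t \<le> - a * S" using speed[of t] t a_nonpos by (intro mult_left_mono) auto
  ultimately show ?thesis using c\<^sub>0 by linarith
qed

lemma sqrt_h_pos: "sqrt h > 0"
  using h by simp

lemma rise_time_le:
  assumes P: "A \<le> P" "P \<le> B" and up: "mono_on {A..P} y"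
  shows "P - A \<le> ef_level b q / sqrt h + 1 + 4 * S / c\<^sub>0"
proof (rule ccontr)
  define T where "T = ef_level b q / sqrt h + 1"
  assume "\<not> ?thesis"
  then have long: "P - A > T + 4 * S / c\<^sub>0" by (simp add: T_def)
  have S: "S \<ge> 0" using speed[of A] arc by auto
  have T: "T > 0" using ef_level_pos sqrt_h_pos by (simp add: T_def add_pos_nonneg)
  define m where "m = A + T"
  have "4 * S / c\<^sub>0 \<ge> 0" using S c\<^sub>0 by simp
  then have m: "A < m" "m < P" using long T by (auto simp: m_def)
  have sub: "t \<in> {A..B}" if "t \<in> {A..P}" for t using that P by auto
  show False
  proof (cases "y m < ef_level b q")
    case True
    have "y m - y A \<ge> sqrt h * (m - A)"
    proof (rule increment_ge_if_deriv_ge[where f'=y'])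
      fix t assume t: "t \<in> {A..m}"
      then have tAP: "t \<in> {A..P}" using m by auto
      show "(y has_real_derivative y' t) (at t)" using y_deriv sub[OF tAP] arc by auto
      have "y t \<le> y m" using monotone_onD[OF up] t m by auto
      then have "\<bar>y' t\<bar> \<ge> sqrt h" using speed_below_level sub[OF tAP] True by auto
      moreover have "y' t \<ge> 0"
        using mono_on_has_real_derivative_nonneg[OF up _ tAP] y_deriv sub[OF tAP] arc m by auto
      ultimately show "y' t \<ge> sqrt h" by simp
    qed (use m in auto)
    then have "y m \<ge> y A + ef_level b q + sqrt h"
      using sqrt_h_pos by (simp add: m_def T_def field_simps)
    then show False using True sqrt_h_pos above arc by fastforce
  next
    case False
    have "y' P - y' m \<le> (- c\<^sub>0 / 2) * (P - m)"
    proof (rule increment_le_if_deriv_le)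
      fix t assume t: "t \<in> {m..P}"
      then have tAP: "t \<in> {A..P}" using m by auto
      show "(y' has_real_derivative (- a * y' t + b * y t - \<bar>y t\<bar> powr q * y t)) (at t)"
        using y'_deriv sub[OF tAP] arc by auto
      have "y m \<le> y t" using monotone_onD[OF up] t m by auto
      then show "- a * y' t + b * y t - \<bar>y t\<bar> powr q * y t \<le> - c\<^sub>0 / 2"
        using acceleration_above_level sub[OF tAP] False by auto
    qed (use m in auto)
    moreover have "(- c\<^sub>0 / 2) * (P - m) < (- c\<^sub>0 / 2) * (4 * S / c\<^sub>0)"
      using long c\<^sub>0 by (intro mult_strict_left_mono_neg) (auto simp: m_def)
    moreover have "y' P - y' m \<ge> - 2 * S" using speed[of P] speed[of m] P m by fastforce
    ultimately show False using c\<^sub>0 by (simp add: field_simps)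
  qed
qed

lemma fall_time_le:
  assumes P: "A \<le> P" "P \<le> B" and down: "antimono_on {P..B} y"
  shows "B - P \<le> ef_level b q / sqrt h + 1 + 4 * S / c\<^sub>0"
proof (rule ccontr)
  define T where "T = ef_level b q / sqrt h + 1"
  assume "\<not> ?thesis"
  then have long: "B - P > T + 4 * S / c\<^sub>0" by (simp add: T_def)
  have S: "S \<ge> 0" using speed[of A] arc by auto
  have T: "T > 0" using ef_level_pos sqrt_h_pos by (simp add: T_def add_pos_nonneg)
  define m where "m = B - T"
  have "4 * S / c\<^sub>0 \<ge> 0" using S c\<^sub>0 by simp
  then have m: "P < m" "m < B" using long T by (auto simp: m_def)
  have sub: "t \<in> {A..B}" if "t \<in> {P..B}" for t using that P by auto
  show False
  proof (cases "y m \<ge> ef_level b q")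
    case True
    have "y' m - y' P \<le> (- c\<^sub>0 / 2) * (m - P)"
    proof (rule increment_le_if_deriv_le)
      fix t assume t: "t \<in> {P..m}"
      then have tPB: "t \<in> {P..B}" using m by auto
      show "(y' has_real_derivative (- a * y' t + b * y t - \<bar>y t\<bar> powr q * y t)) (at t)"
        using y'_deriv sub[OF tPB] arc by auto
      have "y m \<le> y t" using monotone_onD[OF down] t m by auto
      then show "- a * y' t + b * y t - \<bar>y t\<bar> powr q * y t \<le> - c\<^sub>0 / 2"
        using acceleration_above_level sub[OF tPB] True by auto
    qed (use m in auto)
    moreover have "(- c\<^sub>0 / 2) * (m - P) < (- c\<^sub>0 / 2) * (4 * S / c\<^sub>0)"
      using long c\<^sub>0 by (intro mult_strict_left_mono_neg) (auto simp: m_def)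
    moreover have "y' m - y' P \<ge> - 2 * S" using speed[of P] speed[of m] P m by fastforce
    ultimately show False using c\<^sub>0 by (simp add: field_simps)
  next
    case False
    have "y B - y m \<le> (- sqrt h) * (B - m)"
    proof (rule increment_le_if_deriv_le[where f'=y'])
      fix t assume t: "t \<in> {m..B}"
      then have tPB: "t \<in> {P..B}" using m by auto
      show "(y has_real_derivative y' t) (at t)" using y_deriv sub[OF tPB] arc by auto
      have "y t \<le> y m" using monotone_onD[OF down] t m by auto
      then have "\<bar>y' t\<bar> \<ge> sqrt h" using speed_below_level sub[OF tPB] False by auto
      moreover have "y' t \<le> 0"
        using antimono_on_has_real_derivative_nonpos[OF down _ tPB] y_deriv sub[OF tPB] arc m by auto
      ultimately show "y' t \<le> - sqrt h" by simp
    qed (use m in auto)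
    then have "y B \<le> y m - (ef_level b q + sqrt h)"
      using sqrt_h_pos by (simp add: m_def T_def field_simps)
    then show False using False sqrt_h_pos above arc by fastforce
  qed
qed

lemma positive_arc_duration:
  "B - A \<le> 2 * (ef_level b q / sqrt h + 1 + 4 * S / c\<^sub>0)"
proof -
  have "y t > 0" if "A < t" "t < B" for t using above(2)[of t] above(1) that by auto
  then obtain P where "P \<in> {A..B}" "mono_on {A..P} y" "antimono_on {P..B} y"
    using positive_arc_unimodal[OF arc] by blast
  then show ?thesis using rise_time_le[of P] fall_time_le[of P] by auto
qed

end

end

section \<open>Nodal zones\<close>

locale nodal_partition =
  fixes v :: "real \<Rightarrow> real" and m :: nat
  assumes nodal: "nodal_zones v m" and v_1: "v 1 = 0" and continuous_v: "continuous_on {0..1} v"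
begin

abbreviation "t \<equiv> tz v m"
abbreviation "zs \<equiv> sorted_list_of_set (inner_zeros v)"

lemma finite_inner_zeros: "finite (inner_zeros v)" and m_pos: "m \<ge> 1"
  and length_zs: "length zs = m - 1"
  using nodal unfolding nodal_zones_def by auto

lemma set_zs: "set zs = inner_zeros v"
  using finite_inner_zeros by simp

lemma t_0: "t 0 = 0" by (simp add: tz_def)

lemma t_ge_m: "i \<ge> m \<Longrightarrow> t i = 1"
  using m_pos by (simp add: tz_def)

lemma t_eq_nth: "1 \<le> i \<Longrightarrow> i < m \<Longrightarrow> t i = zs ! (i - 1)"
  by (simp add: tz_def)

lemma nth_zs_in_inner_zeros: "k < m - 1 \<Longrightarrow> zs ! k \<in> inner_zeros v"
  using set_zs length_zs nth_mem by metis

lemma t_inner: "1 \<le> i \<Longrightarrow> i < m \<Longrightarrow> 0 < t i \<and> t i < 1 \<and> v (t i) = 0"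
  using nth_zs_in_inner_zeros[of "i - 1"] t_eq_nth[of i] unfolding inner_zeros_def by auto

lemma v_t: "1 \<le> i \<Longrightarrow> v (t i) = 0"
  using t_inner[of i] t_ge_m[of i] v_1 by (cases "i < m") auto

lemma t_in_unit: "0 \<le> t i \<and> t i \<le> 1"
proof (cases "i = 0")
  case False
  then show ?thesis using t_inner[of i] t_ge_m[of i] by (cases "i < m") auto
qed (simp add: t_0)

lemma t_pos: "i \<ge> 1 \<Longrightarrow> t i > 0"
  using t_inner[of i] t_ge_m[of i] by (cases "i < m") auto

lemma t_less_Suc: "i < m \<Longrightarrow> t i < t (Suc i)"
proof (cases "i = 0")
  case True
  then show ?thesis using t_pos[of 1] by (simp add: t_0)
next
  case False
  assume i: "i < m"
  show ?thesis
  proof (cases "Suc i < m")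
    case True
    have "sorted_wrt (<) zs" by (rule strict_sorted_list_of_set)
    then have "zs ! (i - 1) < zs ! i"
      using sorted_wrt_nth_less[of "(<)" zs "i - 1" i] True False length_zs by auto
    then show ?thesis using t_eq_nth[of i] t_eq_nth[of "Suc i"] True False by auto
  next
    case False
    then show ?thesis using t_inner[of i] i \<open>i \<noteq> 0\<close> t_ge_m[of "Suc i"] by auto
  qed
qed

lemma t_mono: "i \<le> j \<Longrightarrow> t i \<le> t j"
proof (rule lift_Suc_mono_le[of t])
  show "t n \<le> t (Suc n)" for n
    using t_less_Suc[of n] t_ge_m[of n] t_ge_m[of "Suc n"] by (cases "n < m") auto
qed

lemma t_less_imp_less: "t i < t j \<Longrightarrow> i < j"
  using t_mono[of j i] by (cases "j \<le> i") auto

lemma v_nonzero_in_zone: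
  assumes i: "i < m" and x: "t i < x" "x < t (Suc i)"
  shows "v x \<noteq> 0"
proof
  assume "v x = 0"
  moreover have "0 < x" "x < 1" using x t_in_unit[of i] t_in_unit[of "Suc i"] by auto
  ultimately have "x \<in> set zs" using set_zs by (simp add: inner_zeros_def)
  then obtain k where k: "k < m - 1" "zs ! k = x" using length_zs by (metis in_set_conv_nth)
  then have "t (Suc k) = x" using t_eq_nth[of "Suc k"] by auto
  then have "i < Suc k" "Suc k < Suc i"
    using t_less_imp_less[of i "Suc k"] t_less_imp_less[of "Suc k" "Suc i"] x by auto
  then show False by simp
qed

lemma zone_containing:
  assumes x: "0 < x" "x < 1"
  obtains j where "j < m" "t j \<le> x" "x \<le> t (Suc j)"
proof -
  have "\<exists>j<k. t j \<le> x \<and> x \<le> t (Suc j)" if "k \<le> m" "x < t k" for k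
    using that
  proof (induction k)
    case 0
    then show ?case using x by (simp add: t_0)
  next
    case (Suc k)
    show ?case
    proof (cases "x < t k")
      case True
      then show ?thesis using Suc by (meson less_SucI Suc_leD)
    next
      case False
      then show ?thesis using Suc.prems by (intro exI[of _ k]) auto
    qed
  qed
  from this[of m] obtain j where "j < m" "t j \<le> x" "x \<le> t (Suc j)"
    using x t_ge_m[of m] by auto
  then show ?thesis by (rule that)
qed

lemma zone_sign_cases:
  assumes i: "i < m"
  shows "(\<forall>x. t i < x \<and> x < t (Suc i) \<longrightarrow> v x > 0) \<or> (\<forall>x. t i < x \<and> x < t (Suc i) \<longrightarrow> v x < 0)"
proof (rule ccontr)
  assume "\<not> ?thesis"
  then obtain x y where xy: "t i < x" "x < t (Suc i)" "t i < y" "y < t (Suc i)" "v x \<le> 0" "v y \<ge> 0"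
    by (meson not_le)
  then have "v x < 0" "v y > 0" using v_nonzero_in_zone[OF i, of x] v_nonzero_in_zone[OF i, of y]
    by linarith+
  note xy = xy(1-4) this
  have cont: "continuous_on {min x y..max x y} v"
    by (rule continuous_on_subset[OF continuous_v]) (use t_in_unit[of i] t_in_unit[of "Suc i"] xy in auto)
  have "\<exists>z. min x y \<le> z \<and> z \<le> max x y \<and> v z = 0"
  proof (cases "x \<le> y")
    case True
    then show ?thesis using IVT'[of v x 0 y] cont xy by auto
  next
    case False
    then show ?thesis using IVT2'[of v x 0 y] cont xy by auto
  qed
  then obtain z where "min x y \<le> z" "z \<le> max x y" "v z = 0" by blast
  moreover have "t i < z" "z < t (Suc i)" using calculation xy by auto
  ultimately show False using v_nonzero_in_zone[OF i] by auto
qed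

lemma zone_boundary_or_inside:
  assumes i: "i < m" and x: "t i \<le> x" "x \<le> t (Suc i)" "0 < x"
  shows "v x = 0 \<or> (t i < x \<and> x < t (Suc i))"
proof (cases "x = t i")
  case True
  then have "i \<ge> 1" using x t_0 by (cases i) auto
  then show ?thesis using v_t True by auto
next
  case False
  then show ?thesis using x v_t[of "Suc i"] by (cases "x = t (Suc i)") auto
qed

end

section \<open>Radial solutions and their Emden--Fowler transform\<close>

text \<open>For \<open>q = p - 1\<close> in \<open>[q_low M, q_crit M)\<close> the Emden--Fowler exponent \<open>\<beta> = 2 / q\<close> lies in
  \<open>((M - 2) / 2, 3 (M - 2) / 4]\<close>; then \<open>b = \<beta> (M - 2 - \<beta>)\<close> lies in \<open>[b_low M, b_high M]\<close> and all
  constants below depend on \<open>M\<close> alone.\<close>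

definition q_crit :: "real \<Rightarrow> real" where "q_crit M = 4 / (M - 2)"
definition q_low :: "real \<Rightarrow> real" where "q_low M = 8 / (3 * (M - 2))"
definition b_high :: "real \<Rightarrow> real" where "b_high M = (M - 2)\<^sup>2 / 4"
definition b_low :: "real \<Rightarrow> real" where "b_low M = (M - 2)\<^sup>2 / 8"

lemma exponent_consts_pos:
  assumes "M > 2"
  shows "q_crit M > 0" "q_low M > 0" "b_high M > 0" "b_low M > 0"
  using assms by (simp_all add: q_crit_def q_low_def b_high_def b_low_def)

definition amp_const :: "real \<Rightarrow> real" where
  "amp_const M = (max 1 ((q_crit M + 2) * b_high M)) powr (2 / q_low M)"

lemma amp_const_ge_1: "M > 2 \<Longrightarrow> amp_const M \<ge> 1"
  unfolding amp_const_def using exponent_consts_pos(2)[of M] by (intro ge_one_powr_ge_zero) auto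

locale radial_solution =
  fixes M p :: real and m :: nat and v :: "real \<Rightarrow> real"
  assumes M_gt_2: "M > 2" and q_ge_q_low: "p - 1 \<ge> q_low M" and p_less_pM: "p < pM M"
    and sol: "radial_sol M p v" and nodal_v: "nodal_zones v m"
begin

abbreviation "q \<equiv> p - 1"
definition beta :: real where "beta = 2 / (p - 1)"
definition ef_a :: real where "ef_a = M - 2 - 2 * beta"
definition ef_b :: real where "ef_b = beta * (M - 2 - beta)"
abbreviation "v' \<equiv> deriv v"

sublocale nodal_partition v m
  using nodal_v sol by unfold_locales (auto simp: radial_sol_def)

lemmas consts_pos = exponent_consts_pos[OF M_gt_2]

lemma q_pos: "q > 0"
  using consts_pos(2) q_ge_q_low by linarith

lemma q_less_q_crit: "q < q_crit M"
  using p_less_pM M_gt_2 by (simp add: pM_def q_crit_def field_simps)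

lemma beta_mult_q: "beta * q = 2"
proof -
  have "q \<noteq> 0" using q_pos by simp
  then show ?thesis unfolding beta_def by (simp only: times_divide_eq_left nonzero_mult_div_cancel_right[OF \<open>q \<noteq> 0\<close>])
qed

lemma beta_pos: "beta > 0" using q_pos by (simp add: beta_def)

lemma beta_gt: "beta > (M - 2) / 2"
proof -
  have "q * (M - 2) < 4" using q_less_q_crit M_gt_2 q_pos by (simp add: q_crit_def field_simps)
  then have "(M - 2) / 2 * q < 2" by (simp add: field_simps)
  then have "(M - 2) / 2 * q < beta * q" using beta_mult_q by simp
  then show ?thesis using q_pos by (simp add: mult_less_cancel_right)
qed

lemma beta_le: "beta \<le> 3 * (M - 2) / 4"
proof -
  have "q * (3 * (M - 2)) \<ge> 8" using q_ge_q_low M_gt_2 by (simp add: q_low_def field_simps)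
  then have "beta * q \<le> 3 * (M - 2) / 4 * q" using beta_mult_q by (simp add: field_simps)
  then show ?thesis using q_pos by (simp add: mult_le_cancel_right)
qed

lemma ef_a_neg: "ef_a < 0" using beta_gt by (simp add: ef_a_def)

lemma ef_b_ge: "ef_b \<ge> b_low M"
proof -
  have "beta * (M - 2 - beta) \<ge> ((M - 2) / 2) * ((M - 2) / 4)"
    using beta_gt beta_le M_gt_2 by (intro mult_mono) auto
  then show ?thesis by (simp add: b_low_def ef_b_def power2_eq_square)
qed

lemma ef_b_pos: "ef_b > 0" using ef_b_ge consts_pos(4) by linarith

lemma ef_b_le: "ef_b \<le> b_high M"
proof -
  have "ef_b = (M - 2)\<^sup>2 / 4 - (beta - (M - 2) / 2)\<^sup>2" by (simp add: ef_b_def power2_eq_square field_simps)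
  then show ?thesis by (simp add: b_high_def)
qed

lemma v_deriv: "0 < x \<Longrightarrow> x < 1 \<Longrightarrow> (v has_real_derivative v' x) (at x)"
  using sol DERIV_deriv_iff_real_differentiable by (auto simp: radial_sol_def)

lemma v'_deriv: assumes x: "0 < x" "x < 1"
  shows "(v' has_real_derivative (- (M - 1) / x * v' x - \<bar>v x\<bar> powr q * v x)) (at x)"
proof -
  let ?P = "\<lambda>s. s powr (M - 1) * v' s"
  have dP: "(?P has_real_derivative (- (x powr (M - 1) * \<bar>v x\<bar> powr (p - 1) * v x))) (at x)"
    using sol x by (auto simp: radial_sol_def)
  have dg: "((\<lambda>s. s powr (1 - M) * ?P s) has_real_derivative
      (1 - M) * x powr (1 - M - 1) * ?P x + (- (x powr (M - 1) * \<bar>v x\<bar> powr (p - 1) * v x)) * x powr (1 - M)) (at x)"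
    by (intro DERIV_mult dP has_real_derivative_powr) (use x in auto)
  have e1: "x powr (1 - M - 1) * x powr (M - 1) = 1 / x"
  proof -
    have "x powr (1 - M - 1) * x powr (M - 1) = x powr ((1 - M - 1) + (M - 1))" by (simp only: powr_add)
    also have "(1 - M - 1) + (M - 1) = -1" by simp
    finally show ?thesis using x by (simp add: powr_minus_divide)
  qed
  have e2: "x powr (1 - M) * x powr (M - 1) = 1"
    using x by (simp add: powr_add[symmetric])
  have "(1 - M) * x powr (1 - M - 1) * ?P x + (- (x powr (M - 1) * \<bar>v x\<bar> powr (p - 1) * v x)) * x powr (1 - M)
      = (1-M) * (x powr (1 - M - 1) * x powr (M - 1)) * v' x - (x powr (1 - M) * x powr (M - 1)) * \<bar>v x\<bar> powr q * v x"
    by (simp add: algebra_simps)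
  also have "\<dots> = - (M - 1) / x * v' x - \<bar>v x\<bar> powr q * v x" using e1 e2 by (simp add: field_simps)
  finally have eq: "(1 - M) * x powr (1 - M - 1) * ?P x + (- (x powr (M - 1) * \<bar>v x\<bar> powr (p - 1) * v x)) * x powr (1 - M)
      = - (M - 1) / x * v' x - \<bar>v x\<bar> powr q * v x" .
  show ?thesis
  proof (rule has_field_derivative_transform_within_open[OF dg[unfolded eq], where S="{0<..}"])
    fix s :: real assume "s \<in> {0<..}"
    then have "s powr (1 - M) * s powr (M - 1) = 1" by (simp add: powr_add[symmetric])
    then show "s powr (1 - M) * ?P s = v' s" by (simp add: mult.assoc[symmetric])
  qed (use x in auto)
qed

definition w :: "real \<Rightarrow> real" where "w \<tau> = exp (beta * \<tau>) * v (exp \<tau>)"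
definition w' :: "real \<Rightarrow> real" where "w' \<tau> = beta * w \<tau> + exp ((beta + 1) * \<tau>) * v' (exp \<tau>)"

lemma exp_beta_plus_1: "exp ((beta + 1) * \<tau>) = exp (beta * \<tau>) * exp \<tau>" by (simp add: distrib_right exp_add)

lemma w_deriv: assumes "\<tau> < 0" shows "(w has_real_derivative w' \<tau>) (at \<tau>)"
proof -
  have x: "0 < exp \<tau>" "exp \<tau> < 1" using assms by auto
  have dve: "((\<lambda>\<tau>. v (exp \<tau>)) has_real_derivative v' (exp \<tau>) * exp \<tau>) (at \<tau>)"
    by (rule DERIV_chain2[OF v_deriv[OF x] DERIV_exp])
  have de: "((\<lambda>\<tau>. exp (beta * \<tau>)) has_real_derivative exp (beta * \<tau>) * beta) (at \<tau>)"
    by (auto intro!: derivative_eq_intros)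
  have "((\<lambda>\<tau>. exp (beta * \<tau>) * v (exp \<tau>)) has_real_derivative
         exp (beta * \<tau>) * beta * v (exp \<tau>) + v' (exp \<tau>) * exp \<tau> * exp (beta * \<tau>)) (at \<tau>)"
    by (rule DERIV_mult[OF de dve])
  moreover have "exp (beta * \<tau>) * beta * v (exp \<tau>) + v' (exp \<tau>) * exp \<tau> * exp (beta * \<tau>) = w' \<tau>"
    unfolding w'_def w_def exp_beta_plus_1 by (simp add: algebra_simps)
  ultimately show ?thesis unfolding w_def[abs_def] by simp
qed

lemma abs_w: "\<bar>w \<tau>\<bar> = exp (beta * \<tau>) * \<bar>v (exp \<tau>)\<bar>" by (simp add: w_def abs_mult)

lemma abs_w_powr: "\<bar>w \<tau>\<bar> powr q = exp (2 * \<tau>) * \<bar>v (exp \<tau>)\<bar> powr q"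
proof -
  have "\<bar>w \<tau>\<bar> powr q = exp (beta * \<tau>) powr q * \<bar>v (exp \<tau>)\<bar> powr q"
    unfolding abs_w by (simp add: powr_mult)
  also have "exp (beta * \<tau>) powr q = exp (2 * \<tau>)"
    using beta_mult_q by (simp add: exp_powr_real algebra_simps)
  finally show ?thesis .
qed

lemma w'_deriv: assumes "\<tau> < 0"
  shows "(w' has_real_derivative (-ef_a * w' \<tau> + ef_b * w \<tau> - \<bar>w \<tau>\<bar> powr q * w \<tau>)) (at \<tau>)"
proof -
  have x: "0 < exp \<tau>" "exp \<tau> < 1" using assms by auto
  define E1 where "E1 = exp ((beta + 1) * \<tau>)"
  define X where "X = v' (exp \<tau>)"
  define V where "V = v (exp \<tau>)"
  define V2 where "V2 = - (M - 1) / exp \<tau> * X - \<bar>V\<bar> powr q * V"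
  have d3: "((\<lambda>\<tau>. v' (exp \<tau>)) has_real_derivative V2 * exp \<tau>) (at \<tau>)"
    unfolding V2_def X_def V_def by (rule DERIV_chain2[OF v'_deriv[OF x] DERIV_exp])
  have d2: "((\<lambda>\<tau>. exp ((beta + 1) * \<tau>)) has_real_derivative E1 * (beta + 1)) (at \<tau>)"
    unfolding E1_def by (auto intro!: derivative_eq_intros)
  have d1: "((\<lambda>\<tau>. beta * w \<tau>) has_real_derivative beta * w' \<tau>) (at \<tau>)"
    by (rule DERIV_cmult[OF w_deriv[OF assms]])
  have "((\<lambda>\<tau>. beta * w \<tau> + exp ((beta + 1) * \<tau>) * v' (exp \<tau>)) has_real_derivative
        beta * w' \<tau> + (E1 * (beta + 1) * v' (exp \<tau>) + V2 * exp \<tau> * exp ((beta + 1) * \<tau>))) (at \<tau>)"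
    by (rule DERIV_add[OF d1 DERIV_mult[OF d2 d3]])
  moreover have "beta * w' \<tau> + (E1 * (beta + 1) * v' (exp \<tau>) + V2 * exp \<tau> * exp ((beta + 1) * \<tau>))
       = -ef_a * w' \<tau> + ef_b * w \<tau> - \<bar>w \<tau>\<bar> powr q * w \<tau>"
  proof -
    have W: "w \<tau> = exp (beta * \<tau>) * V" by (simp add: w_def V_def)
    have hq: "\<bar>w \<tau>\<bar> powr q * w \<tau> = E1 * exp \<tau> * (\<bar>V\<bar> powr q * V)"
    proof -
      have e: "exp (2 * \<tau>) * exp (beta * \<tau>) = E1 * exp \<tau>"
        unfolding E1_def exp_beta_plus_1 by (simp add: exp_add[symmetric] algebra_simps)
      have A: "\<bar>w \<tau>\<bar> powr q = exp (2 * \<tau>) * \<bar>V\<bar> powr q" using abs_w_powr by (simp add: V_def)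
      have "\<bar>w \<tau>\<bar> powr q * w \<tau> = (exp (2 * \<tau>) * \<bar>V\<bar> powr q) * (exp (beta * \<tau>) * V)"
        by (subst A, subst W, rule refl)
      also have "\<dots> = (exp (2 * \<tau>) * exp (beta * \<tau>)) * (\<bar>V\<bar> powr q * V)" by (simp only: mult_ac)
      finally have "\<bar>w \<tau>\<bar> powr q * w \<tau> = (exp (2 * \<tau>) * exp (beta * \<tau>)) * (\<bar>V\<bar> powr q * V)" .
      then show ?thesis using e by simp
    qed
    have w'e: "w' \<tau> = beta * w \<tau> + E1 * X" by (simp add: w'_def E1_def X_def)
    have V2e: "V2 * exp \<tau> = - (M - 1) * X - exp \<tau> * (\<bar>V\<bar> powr q * V)"
      unfolding V2_def using x by (simp add: field_simps)
    have "beta * w' \<tau> + (E1 * (beta + 1) * v' (exp \<tau>) + V2 * exp \<tau> * exp ((beta + 1) * \<tau>))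
        = beta * w' \<tau> + E1 * (beta + 1) * X + E1 * (V2 * exp \<tau>)"
      by (simp add: E1_def X_def algebra_simps)
    also have "\<dots> = beta * w' \<tau> + E1 * (beta + 1) * X - (M - 1) * E1 * X - \<bar>w \<tau>\<bar> powr q * w \<tau>"
      unfolding V2e hq by (simp add: algebra_simps)
    also have "\<dots> = -ef_a * w' \<tau> + ef_b * w \<tau> - \<bar>w \<tau>\<bar> powr q * w \<tau>"
      unfolding w'e ef_a_def ef_b_def by (simp add: algebra_simps)
    finally show ?thesis .
  qed
  ultimately show ?thesis unfolding w'_def[abs_def] by simp
qed

lemma emden_fowler_w: "emden_fowler ef_a ef_b q w w' {..<0}"
  by unfold_locales (use q_pos ef_b_pos ef_a_neg w_deriv w'_deriv in auto)

lemma abs_v_bounded: obtains B where "B \<ge> 0" "\<And>x. x \<in> {0..1} \<Longrightarrow> \<bar>v x\<bar> \<le> B"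
proof -
  have "continuous_on {0..1} (\<lambda>x. \<bar>v x\<bar>)" using continuous_v by (intro continuous_intros)
  then obtain z where "z \<in> {0..1}" "\<And>x. x \<in> {0..1} \<Longrightarrow> \<bar>v x\<bar> \<le> \<bar>v z\<bar>"
    using continuous_attains_sup[of "{0..1::real}" "\<lambda>x. \<bar>v x\<bar>"] by auto
  then show ?thesis using that[of "\<bar>v z\<bar>"] by auto
qed

lemma w_ln: "0 < x \<Longrightarrow> w (ln x) = x powr beta * v x"
  by (simp add: w_def powr_def)

lemma w'_ln: "0 < x \<Longrightarrow> w' (ln x) = beta * w (ln x) + x powr (beta + 1) * v' x"
  by (simp add: w'_def powr_def)

lemma abs_w_ln_powr: "0 < x \<Longrightarrow> \<bar>w (ln x)\<bar> powr q = x\<^sup>2 * \<bar>v x\<bar> powr q"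
proof -
  assume x: "0 < x"
  have "exp (2 * ln x) = x\<^sup>2" by (simp only: mult_2 exp_add exp_ln[OF x] power2_eq_square)
  then show ?thesis using abs_w_powr[of "ln x"] x by simp
qed

lemma energy_w_nonneg: assumes "\<tau> < 0" shows "ef_energy ef_b q (w \<tau>) (w' \<tau>) \<ge> 0"
proof (rule ccontr)
  interpret E0: emden_fowler ef_a ef_b q w w' "{..<0}" by (rule emden_fowler_w)
  assume "\<not> ?thesis"
  then have c: "- ef_energy ef_b q (w \<tau>) (w' \<tau>) > 0" by simp
  obtain B where B: "B \<ge> 0" "\<And>x. x \<in> {0..1} \<Longrightarrow> \<bar>v x\<bar> \<le> B" using abs_v_bounded by blast
  have lim: "((\<lambda>\<xi>. ef_b * (\<xi> powr beta * B)\<^sup>2 / 2) \<longlongrightarrow> 0) (at_right 0)"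
  proof -
    have ev0: "eventually (\<lambda>x::real. 0 \<le> x) (at_right 0)"
      using eventually_at_right_less[of "0::real"] by (rule eventually_mono) auto
    have "((\<lambda>\<xi>. ef_b * (\<xi> powr beta * B)\<^sup>2 / 2) \<longlongrightarrow> ef_b * ((0::real) powr beta * B)\<^sup>2 / 2) (at_right 0)"
      by (intro tendsto_intros) (use beta_pos ev0 in auto)
    then show ?thesis by simp
  qed
  have ev1: "eventually (\<lambda>\<xi>. ef_b * (\<xi> powr beta * B)\<^sup>2 / 2 < - ef_energy ef_b q (w \<tau>) (w' \<tau>)) (at_right 0)"
    using order_tendstoD(2)[OF lim c] .
  have ev2: "eventually (\<lambda>\<xi>. 0 < \<xi> \<and> \<xi> < exp \<tau>) (at_right (0::real))"
    by (rule eventually_at_rightI[of 0 "exp \<tau>"]) auto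
  obtain \<xi> where xi: "ef_b * (\<xi> powr beta * B)\<^sup>2 / 2 < - ef_energy ef_b q (w \<tau>) (w' \<tau>)" "0 < \<xi>" "\<xi> < exp \<tau>"
    using eventually_happens'[OF trivial_limit_at_right_real eventually_conj[OF ev1 ev2]] by blast
  have lnx: "ln \<xi> < \<tau>" using xi by (metis ln_exp ln_less_cancel_iff exp_gt_zero)
  have f1: "ef_energy ef_b q (w (ln \<xi>)) (w' (ln \<xi>)) \<le> ef_energy ef_b q (w \<tau>) (w' \<tau>)"
    using lnx assms by (intro E0.energy_mono) auto
  have f2: "ef_energy ef_b q (w (ln \<xi>)) (w' (ln \<xi>)) \<ge> - ef_b * (w (ln \<xi>))\<^sup>2 / 2"
    using q_pos by (intro ef_energy_ge) auto
  have f3: "(w (ln \<xi>))\<^sup>2 \<le> (\<xi> powr beta * B)\<^sup>2"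
  proof -
    have "\<xi> \<le> 1" using xi assms by (smt (verit) exp_less_one_iff)
    then have "\<bar>v \<xi>\<bar> \<le> B" using B xi by auto
    then have "\<bar>w (ln \<xi>)\<bar> \<le> \<xi> powr beta * B" using xi by (simp add: w_ln abs_mult mult_left_mono)
    then show ?thesis by (metis abs_ge_zero abs_le_square_iff abs_of_nonneg order_trans power2_abs)
  qed
  have "ef_b * (w (ln \<xi>))\<^sup>2 \<le> ef_b * (\<xi> powr beta * B)\<^sup>2" using f3 ef_b_pos by (intro mult_left_mono) auto
  then show False using f1 f2 xi(1) by linarith
qed

lemma emden_fowler_nonneg_energy_w: "emden_fowler_nonneg_energy ef_a ef_b q w w' {..<0}"
  using emden_fowler_w energy_w_nonneg by (intro emden_fowler_nonneg_energy.intro emden_fowler_nonneg_energy_axioms.intro) auto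

definition E :: "real \<Rightarrow> real" where "E x = (v' x)\<^sup>2 / 2 + \<bar>v x\<bar> powr (q + 2) / (q + 2)"

lemma E_deriv: assumes x: "0 < x" "x < 1"
  shows "(E has_real_derivative (- (M - 1) / x * (v' x)\<^sup>2)) (at x)"
proof -
  define V2 where "V2 = - (M - 1) / x * v' x - \<bar>v x\<bar> powr q * v x"
  have h: "((\<lambda>x. \<bar>v x\<bar> powr (q + 2)) has_real_derivative ((q + 2) * \<bar>v x\<bar> powr q * v x) * v' x) (at x)"
    using DERIV_chain2[OF has_real_derivative_abs_powr[OF q_pos] v_deriv[OF x]] .
  have h2: "((\<lambda>x. \<bar>v x\<bar> powr (q + 2) / (q + 2)) has_real_derivative ((q + 2) * \<bar>v x\<bar> powr q * v x) * v' x / (q + 2)) (at x)"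
    by (rule DERIV_cdivide[OF h])
  have e1: "((\<lambda>x. (v' x)\<^sup>2 / 2) has_real_derivative v' x * V2) (at x)"
    using v'_deriv[OF x] unfolding V2_def[symmetric] by (auto intro!: derivative_eq_intros)
  have "((\<lambda>x. (v' x)\<^sup>2 / 2 + \<bar>v x\<bar> powr (q + 2) / (q + 2)) has_real_derivative
     v' x * V2 + ((q + 2) * \<bar>v x\<bar> powr q * v x) * v' x / (q + 2)) (at x)"
    by (intro DERIV_add e1 h2)
  moreover have "v' x * V2 + ((q + 2) * \<bar>v x\<bar> powr q * v x) * v' x / (q + 2) = - (M - 1) / x * (v' x)\<^sup>2"
  proof -
    have c: "((q + 2) * \<bar>v x\<bar> powr q * v x) * v' x / (q + 2) = \<bar>v x\<bar> powr q * v x * v' x" using q_pos by simp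
    show ?thesis unfolding c V2_def by (simp add: algebra_simps power2_eq_square)
  qed
  ultimately show ?thesis unfolding E_def[abs_def] by simp
qed

lemma E_antimono: assumes "0 < x" "x \<le> y" "y < 1" shows "E y \<le> E x"
proof -
  have "(\<lambda>x. - E x) x \<le> (\<lambda>x. - E x) y"
  proof (rule deriv_nonneg_imp_mono[where g="\<lambda>x. - E x" and g'="\<lambda>x. - (- (M - 1) / x * (v' x)\<^sup>2)"])
    fix z assume z: "z \<in> {x..y}"
    then have z01: "0 < z" "z < 1" using assms by auto
    show "((\<lambda>x. - E x) has_real_derivative - (- (M - 1) / z * (v' z)\<^sup>2)) (at z)"
      using DERIV_minus[OF E_deriv[OF z01]] .
    have h: "- (M - 1) / z \<le> 0" using M_gt_2 z01 by (simp add: divide_nonpos_pos)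
    have "- (M - 1) / z * (v' z)\<^sup>2 \<le> 0" by (rule mult_nonpos_nonneg[OF h]) simp
    then show "0 \<le> - (- (M - 1) / z * (v' z)\<^sup>2)" by linarith
  qed (use assms in auto)
  then show ?thesis by simp
qed

lemma zone_max_exists: assumes "i < m"
  shows "\<exists>\<rho>. \<rho> \<in> {t i..t (Suc i)} \<and> (\<forall>x\<in>{t i..t (Suc i)}. \<bar>v x\<bar> \<le> \<bar>v \<rho>\<bar>)"
proof -
  have "continuous_on {t i..t (Suc i)} (\<lambda>x. \<bar>v x\<bar>)"
    by (intro continuous_intros continuous_on_subset[OF continuous_v]) (use t_in_unit[of i] t_in_unit[of "Suc i"] in auto)
  moreover have "{t i..t (Suc i)} \<noteq> {}" using t_less_Suc[OF assms] by auto
  ultimately show ?thesis using continuous_attains_sup[of "{t i..t (Suc i)}" "\<lambda>x. \<bar>v x\<bar>"] by auto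
qed

definition rho :: "nat \<Rightarrow> real" where
  "rho i = (SOME \<rho>. \<rho> \<in> {t i..t (Suc i)} \<and> (\<forall>x\<in>{t i..t (Suc i)}. \<bar>v x\<bar> \<le> \<bar>v \<rho>\<bar>))"

lemma rho: assumes "i < m"
  shows "rho i \<in> {t i..t (Suc i)}" "\<And>x. x \<in> {t i..t (Suc i)} \<Longrightarrow> \<bar>v x\<bar> \<le> \<bar>v (rho i)\<bar>"
  using someI_ex[OF zone_max_exists[OF assms]] unfolding rho_def by auto

lemma Mloc_eq_rho: assumes "i < m" shows "Mloc v m i = \<bar>v (rho i)\<bar>"
  unfolding Mloc_def using rho[OF assms] by (intro cSup_eq_maximum) auto

lemma Mloc_pos: assumes i: "i < m" shows "Mloc v m i > 0"
proof -
  define x where "x = (t i + t (Suc i)) / 2"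
  have x: "t i < x" "x < t (Suc i)" using t_less_Suc[OF i] by (auto simp: x_def)
  have "v x \<noteq> 0" using v_nonzero_in_zone[OF i x] .
  moreover have "\<bar>v x\<bar> \<le> \<bar>v (rho i)\<bar>" using rho(2)[OF i, of x] x by auto
  ultimately show ?thesis using Mloc_eq_rho[OF i] by simp
qed

lemma rho_zero_or_inside: assumes i: "i < m" shows "rho i = 0 \<or> (t i < rho i \<and> rho i < t (Suc i))"
proof -
  have r: "t i \<le> rho i" "rho i \<le> t (Suc i)" using rho(1)[OF i] by auto
  have nodal_v: "v (rho i) \<noteq> 0" using Mloc_pos[OF i] Mloc_eq_rho[OF i] by simp
  have "rho i \<noteq> t (Suc i)" using nodal_v v_t[of "Suc i"] by auto
  moreover have "rho i = t i \<Longrightarrow> i = 0"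
  proof (rule ccontr)
    assume "rho i = t i" "i \<noteq> 0"
    then show False using nodal_v v_t[of i] by auto
  qed
  ultimately show ?thesis using r t_0 by (cases "rho i = t i") auto
qed

lemma rho_nonneg: "i < m \<Longrightarrow> rho i \<ge> 0" using rho(1) t_in_unit by (meson atLeastAtMost_iff order_trans)

lemma deriv_v_rho: assumes i: "i < m" and pos: "rho i > 0" shows "v' (rho i) = 0"
proof -
  have r: "t i < rho i" "rho i < t (Suc i)" using rho_zero_or_inside[OF i] pos by auto
  have r01: "0 < rho i" "rho i < 1" using r pos t_in_unit[of "Suc i"] by auto
  define d where "d = min (rho i - t i) (t (Suc i) - rho i)"
  have d: "d > 0" using r by (simp add: d_def)
  have inI: "x \<in> {t i..t (Suc i)}" if "\<bar>rho i - x\<bar> < d" for x using that by (auto simp: d_def abs_less_iff)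
  have inI': "t i < x \<and> x < t (Suc i)" if "\<bar>rho i - x\<bar> < d" for x using that by (auto simp: d_def abs_less_iff)
  show ?thesis
  proof (cases "v (rho i) > 0")
    case True
    show ?thesis
    proof (rule DERIV_local_max[OF v_deriv[OF r01] d])
      show "\<forall>y. \<bar>rho i - y\<bar> < d \<longrightarrow> v y \<le> v (rho i)"
        using rho(2)[OF i] inI True by (smt (verit))
    qed
  next
    case False
    then have neg: "v (rho i) \<le> 0" by simp
    show ?thesis
    proof (rule DERIV_local_min[OF v_deriv[OF r01] d])
      show "\<forall>y. \<bar>rho i - y\<bar> < d \<longrightarrow> v (rho i) \<le> v y"
        using rho(2)[OF i] inI neg by (smt (verit))
    qed
  qed
qed

lemma v_differentiable: "0 < x \<Longrightarrow> x < 1 \<Longrightarrow> v differentiable (at x)"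
  using sol by (auto simp: radial_sol_def)

lemma E_le_value_at_origin:
  assumes i: "i < m" and r0: "rho i = 0" and x: "0 < x" "x < 1"
  shows "E x \<le> \<bar>v 0\<bar> powr (q + 2) / (q + 2)"
proof (rule ccontr)
  let ?C = "\<bar>v 0\<bar> powr (q + 2) / (q + 2)"
  assume "\<not> ?thesis"
  then have gap: "E x - ?C > 0" by simp
  define \<delta> where "\<delta> = sqrt (E x - ?C)"
  have \<delta>: "\<delta> > 0" "\<delta>\<^sup>2 / 2 < E x - ?C" using gap by (auto simp: \<delta>_def)
  have i0: "i = 0" using rho_zero_or_inside[OF i] r0 rho(1)[OF i] t_pos[of i] by (cases i) auto
  have t1: "t (Suc 0) > 0" using t_pos[of 1] by simp
  have d0: "(v has_real_derivative 0) (at 0 within {0..1})" using sol by (simp add: radial_sol_def)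
  then have "((\<lambda>y. (v y - v 0) / (y - 0)) \<longlongrightarrow> 0) (at 0 within {0..1})"
    by (simp add: has_field_derivative_iff)
  from tendstoD[OF this \<delta>(1)] have
    "\<exists>d>0. \<forall>y\<in>{0..1}. y \<noteq> 0 \<and> dist y 0 < d \<longrightarrow> dist ((v y - v 0) / (y - 0)) 0 < \<delta>"
    unfolding eventually_at .
  then obtain d where d: "d > 0"
    "\<And>y. y \<in> {0..1} \<Longrightarrow> y \<noteq> 0 \<Longrightarrow> dist y 0 < d \<Longrightarrow> dist ((v y - v 0) / (y - 0)) 0 < \<delta>"
    by blast
  define r where "r = min d (min x (t (Suc 0))) / 2"
  have r: "0 < r" "r < d" "r < x" "r < t (Suc 0)" using d x t1 by (auto simp: r_def)
  have r1: "r < 1" using r x by simp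
  have quot: "\<bar>(v r - v 0) / r\<bar> < \<delta>" using d(2)[of r] r r1 by (simp add: dist_real_def)
  have cont: "continuous_on {0..r} v" by (rule continuous_on_subset[OF continuous_v]) (use r1 in auto)
  have diff: "v differentiable (at y)" if "0 < y" "y < r" for y using v_differentiable that r1 by auto
  obtain l z where z: "0 < z" "z < r" "(v has_real_derivative l) (at z)" "v r - v 0 = (r - 0) * l"
    using MVT[OF r(1) cont diff] by blast
  have z1: "z < 1" using z r1 by simp
  have l: "l = v' z" using DERIV_unique[OF z(3) v_deriv[OF z(1) z1]] .
  have vz: "\<bar>v' z\<bar> < \<delta>" using quot z(4) r(1) l by simp
  have "\<bar>v z\<bar> \<le> \<bar>v (rho i)\<bar>" using rho(2)[OF i, of z] i0 z r t_0 by auto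
  then have "\<bar>v z\<bar> powr (q + 2) \<le> \<bar>v 0\<bar> powr (q + 2)" using r0 q_pos by (intro powr_mono2) auto
  then have "\<bar>v z\<bar> powr (q + 2) / (q + 2) \<le> ?C" using q_pos by (intro divide_right_mono) auto
  moreover have "(v' z)\<^sup>2 \<le> \<delta>\<^sup>2" using vz by (metis abs_ge_zero less_imp_le power2_abs power_mono)
  ultimately have "E z \<le> \<delta>\<^sup>2 / 2 + ?C" unfolding E_def by linarith
  moreover have "E x \<le> E z" using z r x by (intro E_antimono) auto
  ultimately show False using \<delta> by linarith
qed

lemma E_le_peak_value:
  assumes i: "i < m" and x: "0 < x" "x < 1" "rho i \<le> x"
  shows "E x \<le> \<bar>v (rho i)\<bar> powr (q + 2) / (q + 2)"
proof (cases "rho i = 0")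
  case True then show ?thesis using E_le_value_at_origin[OF i True x(1,2)] by simp
next
  case False
  then have pos: "rho i > 0" using rho_nonneg[OF i] by simp
  have "E x \<le> E (rho i)" using pos x by (intro E_antimono) auto
  also have "E (rho i) = \<bar>v (rho i)\<bar> powr (q + 2) / (q + 2)" unfolding E_def using deriv_v_rho[OF i pos] by simp
  finally show ?thesis .
qed

abbreviation "ML i \<equiv> Mloc v m i"
abbreviation "MT i \<equiv> Mtil p v m i"

lemma Mtil_eq: "MT i = ML i powr (q / 2)" by (simp add: Mtil_def)

lemma Mtil_pos: assumes "i < m" shows "MT i > 0"
proof -
  have "ML i > 0" using Mloc_pos[OF assms] .
  then show ?thesis by (simp add: Mtil_eq)
qed

lemma Mloc_Mtil_sq: "i < m \<Longrightarrow> (ML i * MT i)\<^sup>2 = ML i powr (q + 2)"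
proof -
  assume i: "i < m"
  have pos: "ML i > 0" using Mloc_pos[OF i] .
  have "(ML i * MT i)\<^sup>2 = ML i powr 2 * (ML i powr (q / 2)) powr 2"
    using pos by (simp add: Mtil_eq power_mult_distrib powr_numeral)
  also have "(ML i powr (q / 2)) powr 2 = ML i powr q"
  proof -
    have "(ML i powr (q / 2)) powr 2 = ML i powr (q / 2 * 2)" by (simp only: powr_powr)
    also have "q / 2 * 2 = q" by simp
    finally show ?thesis .
  qed
  also have "ML i powr 2 * ML i powr q = ML i powr (q + 2)" by (simp add: powr_add[symmetric] add.commute)
  finally show ?thesis .
qed

lemma abs_deriv_v_le:
  assumes i: "i < m" and x: "0 < x" "x < 1" "rho i \<le> x"
  shows "\<bar>v' x\<bar> \<le> ML i * MT i"
proof -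
  have "(v' x)\<^sup>2 \<le> 2 * E x"
  proof -
    have "\<bar>v x\<bar> powr (q + 2) / (q + 2) \<ge> 0" using q_pos by simp
    moreover have "2 * E x = (v' x)\<^sup>2 + 2 * (\<bar>v x\<bar> powr (q + 2) / (q + 2))" by (simp add: E_def algebra_simps)
    ultimately show ?thesis by linarith
  qed
  also have "\<dots> \<le> 2 * (\<bar>v (rho i)\<bar> powr (q + 2) / (q + 2))" using E_le_peak_value[OF i x] by simp
  also have "\<dots> \<le> \<bar>v (rho i)\<bar> powr (q + 2)"
  proof -
    have "2 / (q + 2) \<le> 1" using q_pos by simp
    then have "2 / (q + 2) * \<bar>v (rho i)\<bar> powr (q + 2) \<le> 1 * \<bar>v (rho i)\<bar> powr (q + 2)"
      by (intro mult_right_mono) auto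
    then show ?thesis by simp
  qed
  also have "\<dots> = (ML i * MT i)\<^sup>2" using Mloc_Mtil_sq[OF i] Mloc_eq_rho[OF i] by simp
  finally have "(v' x)\<^sup>2 \<le> (ML i * MT i)\<^sup>2" .
  moreover have "ML i * MT i \<ge> 0" using Mloc_pos[OF i] Mtil_pos[OF i] by simp
  ultimately show ?thesis using abs_le_square_iff by (metis abs_of_nonneg)
qed

lemma abs_v_ge_after_peak:
  assumes i: "i < m" and s: "rho i \<le> s" "s \<le> 1"
  shows "\<bar>v s\<bar> \<ge> ML i - (s - rho i) * (ML i * MT i)"
proof (cases "s = rho i")
  case True then show ?thesis using Mloc_eq_rho[OF i] by simp
next
  case False
  then have lt: "rho i < s" using s by simp
  have r0: "rho i \<ge> 0" using rho_nonneg[OF i] .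
  have cont: "continuous_on {rho i..s} v" by (rule continuous_on_subset[OF continuous_v]) (use r0 s in auto)
  have diff: "v differentiable (at y)" if "rho i < y" "y < s" for y using v_differentiable that r0 s by auto
  obtain l z where z: "rho i < z" "z < s" "(v has_real_derivative l) (at z)" "v s - v (rho i) = (s - rho i) * l"
    using MVT[OF lt cont diff] by blast
  have z01: "0 < z" "z < 1" using z r0 s by auto
  have l: "l = v' z" using DERIV_unique[OF z(3) v_deriv[OF z01]] .
  have "\<bar>l\<bar> \<le> ML i * MT i" using abs_deriv_v_le[OF i z01] z l by simp
  then have "\<bar>v s - v (rho i)\<bar> \<le> (s - rho i) * (ML i * MT i)"
    using z(4) lt by (simp add: abs_mult mult_left_mono)
  then show ?thesis using Mloc_eq_rho[OF i] by linarith
qed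

lemma t_Suc_Mtil_ge_1: assumes i: "Suc i < m" shows "t (Suc i) * MT i \<ge> 1"
proof -
  have i': "i < m" using i by simp
  have s: "rho i \<le> t (Suc i)" "t (Suc i) \<le> 1" using rho(1)[OF i'] t_in_unit[of "Suc i"] by auto
  have "v (t (Suc i)) = 0" using v_t[of "Suc i"] by simp
  then have "0 \<ge> ML i - (t (Suc i) - rho i) * (ML i * MT i)" using abs_v_ge_after_peak[OF i' s] by simp
  then have "ML i * 1 \<le> ML i * ((t (Suc i) - rho i) * MT i)" by (simp add: algebra_simps)
  then have "1 \<le> (t (Suc i) - rho i) * MT i" using Mloc_pos[OF i'] by (simp add: mult_le_cancel_left_pos)
  also have "\<dots> \<le> t (Suc i) * MT i" using rho_nonneg[OF i'] Mtil_pos[OF i'] by (intro mult_right_mono) auto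
  finally show ?thesis .
qed

lemma Mloc_Suc_le: assumes i: "Suc i < m" shows "ML (Suc i) \<le> ML i"
proof -
  have i': "i < m" using i by simp
  have rr: "t (Suc i) \<le> rho (Suc i)" "rho (Suc i) \<le> t (Suc (Suc i))" using rho(1)[OF i] by auto
  have pos: "rho (Suc i) > 0" using rr t_pos[of "Suc i"] by simp
  have lt1: "rho (Suc i) < 1"
    using rho_zero_or_inside[OF i] pos t_in_unit[of "Suc (Suc i)"] by auto
  have ge: "rho i \<le> rho (Suc i)" using rho(1)[OF i'] rr by auto
  have "E (rho (Suc i)) = \<bar>v (rho (Suc i))\<bar> powr (q + 2) / (q + 2)"
    unfolding E_def using deriv_v_rho[OF i pos] by simp
  then have "\<bar>v (rho (Suc i))\<bar> powr (q + 2) / (q + 2) \<le> \<bar>v (rho i)\<bar> powr (q + 2) / (q + 2)"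
    using E_le_peak_value[OF i' pos lt1 ge] by simp
  then have le: "\<bar>v (rho (Suc i))\<bar> powr (q + 2) \<le> \<bar>v (rho i)\<bar> powr (q + 2)"
    using q_pos by (simp add: divide_le_cancel)
  show ?thesis
  proof (rule ccontr)
    assume "\<not> ?thesis"
    then have "\<bar>v (rho i)\<bar> < \<bar>v (rho (Suc i))\<bar>" using Mloc_eq_rho[OF i] Mloc_eq_rho[OF i'] by simp
    then have "\<bar>v (rho i)\<bar> powr (q + 2) < \<bar>v (rho (Suc i))\<bar> powr (q + 2)"
      using q_pos by (intro powr_less_mono2) auto
    then show False using le by simp
  qed
qed

lemma Mtil_antimono: assumes "i \<le> j" "j < m" shows "MT j \<le> MT i"
  using assms
proof (induction j)
  case 0 then show ?case by simp
next
  case (Suc j)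
  show ?case
  proof (cases "i = Suc j")
    case True then show ?thesis by simp
  next
    case False
    then have ij: "i \<le> j" using Suc by simp
    have "ML (Suc j) \<le> ML j" using Mloc_Suc_le Suc by simp
    then have "MT (Suc j) \<le> MT j" unfolding Mtil_eq using Mloc_pos[of "Suc j"] Suc q_pos
      by (intro powr_mono2) auto
    also have "MT j \<le> MT i" using Suc ij by simp
    finally show ?thesis .
  qed
qed

end

section \<open>A uniform bound for the Emden--Fowler energy\<close>

definition growth_const :: "real \<Rightarrow> real" where
  "growth_const M = 2 + 2 * (b_high M + 1) * (q_crit M + 2)"

context radial_solution
begin

lemma w_sq_le:
  assumes "ef_energy ef_b q (w \<tau>) (w' \<tau>) \<le> \<Phi>" "\<Phi> \<ge> 0"
  shows "(w \<tau>)\<^sup>2 \<le> amp_const M + 2 * (q_crit M + 2) * \<Phi>"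
  using sq_le_of_energy_le[OF consts_pos(2) q_ge_q_low less_imp_le[OF q_less_q_crit] ef_b_pos ef_b_le assms]
  unfolding amp_const_def .

lemma w'_sq_le:
  assumes "ef_energy ef_b q (w \<tau>) (w' \<tau>) \<le> \<Phi>" "\<Phi> \<ge> 0"
  shows "(w' \<tau>)\<^sup>2 \<le> 2 * \<Phi> + b_high M * (amp_const M + 2 * (q_crit M + 2) * \<Phi>)"
proof -
  have "(w' \<tau>)\<^sup>2 \<le> 2 * \<Phi> + ef_b * (w \<tau>)\<^sup>2"
    using ef_energy_derivative_sq_le[OF assms(1)] q_pos by simp
  also have "ef_b * (w \<tau>)\<^sup>2 \<le> b_high M * (amp_const M + 2 * (q_crit M + 2) * \<Phi>)"
    using w_sq_le[OF assms] ef_b_le ef_b_pos by (intro mult_mono) auto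
  finally show ?thesis by simp
qed

lemma zone_sign_normalised:
  assumes j: "j < m"
  obtains y y' where "emden_fowler_nonneg_energy ef_a ef_b q y y' {..<0}"
    and "\<And>\<tau>. \<bar>y \<tau>\<bar> = \<bar>w \<tau>\<bar>" "\<And>\<tau>. \<bar>y' \<tau>\<bar> = \<bar>w' \<tau>\<bar>"
    and "\<And>\<tau>. ef_energy ef_b q (y \<tau>) (y' \<tau>) = ef_energy ef_b q (w \<tau>) (w' \<tau>)"
    and "\<And>x. t j < x \<Longrightarrow> x < t (Suc j) \<Longrightarrow> y (ln x) > 0"
proof -
  interpret P: emden_fowler_nonneg_energy ef_a ef_b q w w' "{..<0}"
    by (rule emden_fowler_nonneg_energy_w)
  have pos: "x > 0" if "t j < x" for x using that t_in_unit[of j] by simp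
  consider "\<forall>x. t j < x \<and> x < t (Suc j) \<longrightarrow> v x > 0" | "\<forall>x. t j < x \<and> x < t (Suc j) \<longrightarrow> v x < 0"
    using zone_sign_cases[OF j] by blast
  then show ?thesis
  proof cases
    case 1
    show ?thesis
    proof (rule that[OF emden_fowler_nonneg_energy_w])
      fix x assume "t j < x" "x < t (Suc j)"
      then have "v x > 0" "x > 0" using 1 pos by auto
      then show "w (ln x) > 0" by (simp add: w_ln)
    qed auto
  next
    case 2
    show ?thesis
    proof (rule that[OF P.uminus_nonneg_energy])
      fix x assume "t j < x" "x < t (Suc j)"
      then have "v x < 0" "x > 0" using 2 pos by auto
      then show "- w (ln x) > 0" by (simp add: w_ln mult_pos_neg)
    qed (auto simp: ef_energy_uminus)
  qed
qed

lemma energy_w_increment_in_zone: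
  assumes j: "j < m" and x: "t j \<le> x\<^sub>1" "x\<^sub>1 \<le> x\<^sub>2" "x\<^sub>2 \<le> t (Suc j)" "0 < x\<^sub>1" "x\<^sub>2 < 1"
    and bound: "\<And>\<tau>. ln x\<^sub>1 \<le> \<tau> \<Longrightarrow> \<tau> \<le> ln x\<^sub>2 \<Longrightarrow> \<bar>w \<tau>\<bar> \<le> W \<and> \<bar>w' \<tau>\<bar> \<le> S"
  shows "ef_energy ef_b q (w (ln x\<^sub>2)) (w' (ln x\<^sub>2)) - ef_energy ef_b q (w (ln x\<^sub>1)) (w' (ln x\<^sub>1))
      \<le> 2 * (- ef_a) * S * W"
proof -
  obtain y y' where "emden_fowler_nonneg_energy ef_a ef_b q y y' {..<0}"
    and abs_y: "\<And>\<tau>. \<bar>y \<tau>\<bar> = \<bar>w \<tau>\<bar>" "\<And>\<tau>. \<bar>y' \<tau>\<bar> = \<bar>w' \<tau>\<bar>"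
    and energy_y: "\<And>\<tau>. ef_energy ef_b q (y \<tau>) (y' \<tau>) = ef_energy ef_b q (w \<tau>) (w' \<tau>)"
    and pos: "\<And>x. t j < x \<Longrightarrow> x < t (Suc j) \<Longrightarrow> y (ln x) > 0"
    using zone_sign_normalised[OF j] by blast
  then interpret Y: emden_fowler_nonneg_energy ef_a ef_b q y y' "{..<0}" by simp
  have nonneg: "y (ln x) \<ge> 0" if "t j \<le> x" "x \<le> t (Suc j)" "0 < x" for x
    using zone_boundary_or_inside[OF j that] pos[of x] abs_y(1)[of "ln x"] that
    by (auto simp: w_ln)
  have "ef_energy ef_b q (y (ln x\<^sub>2)) (y' (ln x\<^sub>2)) - ef_energy ef_b q (y (ln x\<^sub>1)) (y' (ln x\<^sub>1))
      \<le> 2 * (- ef_a) * S * W"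
  proof (rule Y.energy_increment_positive_arc)
    show "ln x\<^sub>1 \<le> ln x\<^sub>2" using x by simp
    have "ln x\<^sub>2 < 0" using x by simp
    then show "{ln x\<^sub>1..ln x\<^sub>2} \<subseteq> {..<0}" by (auto intro: le_less_trans)
    show "y (ln x\<^sub>1) \<ge> 0" "y (ln x\<^sub>2) \<ge> 0" using nonneg x by auto
  next
    fix \<tau> assume "ln x\<^sub>1 < \<tau>" "\<tau> < ln x\<^sub>2"
    then have "x\<^sub>1 < exp \<tau>" "exp \<tau> < x\<^sub>2" using x by (metis exp_ln exp_less_cancel_iff less_le_trans)+
    then show "y \<tau> > 0" using pos[of "exp \<tau>"] x by simp
  next
    fix \<tau> assume "\<tau> \<in> {ln x\<^sub>1..ln x\<^sub>2}"
    then show "y \<tau> \<le> W" "\<bar>y' \<tau>\<bar> \<le> S" using bound[of \<tau>] abs_y[of \<tau>] by auto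
  qed
  then show ?thesis by (simp only: energy_y)
qed

lemma small_transform_near_origin:
  assumes B: "\<And>x. x \<in> {0..1} \<Longrightarrow> \<bar>v x\<bar> \<le> B" and r: "0 < r" "r < 1"
  obtains \<xi> where "0 < \<xi>" "\<xi> < r" "\<bar>w (ln \<xi>)\<bar> \<le> B * r powr beta"
    "\<bar>w' (ln \<xi>)\<bar> \<le> (beta + 2) * B * r powr beta"
proof -
  have cont: "continuous_on {0..r} v" by (rule continuous_on_subset[OF continuous_v]) (use r in auto)
  have diff: "v differentiable (at y)" if "0 < y" "y < r" for y using v_differentiable that r by auto
  obtain l \<xi> where \<xi>: "0 < \<xi>" "\<xi> < r" "(v has_real_derivative l) (at \<xi>)" "v r - v 0 = (r - 0) * l"
    using MVT[OF r(1) cont diff] by blast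
  have "l = v' \<xi>" using DERIV_unique[OF \<xi>(3) v_deriv] \<xi> r by simp
  moreover have "\<bar>v r\<bar> \<le> B" "\<bar>v 0\<bar> \<le> B" "\<bar>v \<xi>\<bar> \<le> B" using B r \<xi> by auto
  ultimately have "r * \<bar>v' \<xi>\<bar> \<le> 2 * B" using \<xi>(4) r by (simp add: abs_mult)
  moreover have "\<xi> * \<bar>v' \<xi>\<bar> \<le> r * \<bar>v' \<xi>\<bar>" using \<xi> by (intro mult_right_mono) auto
  ultimately have v'\<xi>: "\<xi> * \<bar>v' \<xi>\<bar> \<le> 2 * B" by linarith
  have B0: "B \<ge> 0" using B[of 0] by auto
  have pw: "\<xi> powr beta \<le> r powr beta" using \<xi> beta_pos by (intro powr_mono2) auto
  have w\<xi>: "\<bar>w (ln \<xi>)\<bar> \<le> B * r powr beta"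
  proof -
    have "\<bar>w (ln \<xi>)\<bar> = \<xi> powr beta * \<bar>v \<xi>\<bar>" using \<xi> by (simp add: w_ln abs_mult)
    also have "\<dots> \<le> r powr beta * B" using pw \<open>\<bar>v \<xi>\<bar> \<le> B\<close> by (intro mult_mono) auto
    finally show ?thesis by (simp add: mult.commute)
  qed
  have "\<bar>\<xi> powr (beta + 1) * v' \<xi>\<bar> = \<xi> powr beta * (\<xi> * \<bar>v' \<xi>\<bar>)"
    using \<xi> by (simp add: powr_add abs_mult)
  also have "\<dots> \<le> r powr beta * (2 * B)" by (rule mult_mono) (use pw v'\<xi> B0 \<xi> in auto)
  finally have "\<bar>\<xi> powr (beta + 1) * v' \<xi>\<bar> \<le> r powr beta * (2 * B)" .
  moreover have "\<bar>beta * w (ln \<xi>)\<bar> \<le> beta * (B * r powr beta)"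
    using w\<xi> beta_pos by (simp add: abs_mult mult_left_mono)
  moreover have "\<bar>w' (ln \<xi>)\<bar> \<le> \<bar>beta * w (ln \<xi>)\<bar> + \<bar>\<xi> powr (beta + 1) * v' \<xi>\<bar>"
    using \<xi> by (simp add: w'_ln abs_triangle_ineq)
  ultimately have "\<bar>w' (ln \<xi>)\<bar> \<le> (beta + 2) * B * r powr beta" by (simp add: algebra_simps)
  then show ?thesis using that \<xi> w\<xi> by blast
qed

lemma energy_w_small_near_origin:
  assumes T: "T < 0"
  obtains \<xi> where "0 < \<xi>" "\<xi> < t 1" "\<xi> < exp T" "ef_energy ef_b q (w (ln \<xi>)) (w' (ln \<xi>)) \<le> 1"
proof -
  obtain B where B: "\<And>x. x \<in> {0..1} \<Longrightarrow> \<bar>v x\<bar> \<le> B" using abs_v_bounded by blast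
  then have "B \<ge> 0" by force
  define G where "G r = ((beta + 2) * B * r powr beta)\<^sup>2 / 2 + (B * r powr beta) powr (q + 2) / (q + 2)" for r
  have "eventually (\<lambda>x::real. 0 \<le> x) (at_right 0)"
    using eventually_at_right_less[of "0::real"] by (rule eventually_mono) auto
  then have "(G \<longlongrightarrow> G 0) (at_right 0)"
    unfolding G_def by (intro tendsto_intros) (use beta_pos q_pos \<open>B \<ge> 0\<close> in auto)
  moreover have "G 0 = 0" using q_pos by (simp add: G_def)
  ultimately have ev1: "eventually (\<lambda>r. G r < 1) (at_right 0)"
    using order_tendstoD(2)[of G 0 "at_right 0" 1] by simp
  have ev2: "eventually (\<lambda>r. 0 < r \<and> r < min (t 1) (exp T)) (at_right (0::real))"
    by (rule eventually_at_rightI[of 0 "min (t 1) (exp T)"]) (use t_pos[of 1] in auto)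
  obtain r where r: "G r < 1" "0 < r" "r < t 1" "r < exp T"
    using eventually_happens'[OF trivial_limit_at_right_real eventually_conj[OF ev1 ev2]] by auto
  have "r < 1" using r T exp_less_one_iff[of T] by linarith
  then obtain \<xi> where \<xi>: "0 < \<xi>" "\<xi> < r" "\<bar>w (ln \<xi>)\<bar> \<le> B * r powr beta"
      "\<bar>w' (ln \<xi>)\<bar> \<le> (beta + 2) * B * r powr beta"
    using small_transform_near_origin[OF B r(2)] by blast
  have "ef_energy ef_b q (w (ln \<xi>)) (w' (ln \<xi>)) \<le> (w' (ln \<xi>))\<^sup>2 / 2 + \<bar>w (ln \<xi>)\<bar> powr (q + 2) / (q + 2)"
    unfolding ef_energy_def using ef_b_pos by simp
  also have "\<dots> \<le> G r"
  proof -
    have "(w' (ln \<xi>))\<^sup>2 \<le> ((beta + 2) * B * r powr beta)\<^sup>2"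
      using \<xi>(4) by (metis abs_ge_zero abs_le_square_iff abs_of_nonneg order_trans power2_abs)
    moreover have "\<bar>w (ln \<xi>)\<bar> powr (q + 2) \<le> (B * r powr beta) powr (q + 2)"
      using \<xi>(3) q_pos by (intro powr_mono2) auto
    ultimately show ?thesis unfolding G_def using q_pos by (simp add: divide_right_mono add_mono)
  qed
  finally show ?thesis using that \<xi> r by simp
qed

lemma energy_w_increment_across_zones:
  assumes T: "T < 0" and bound: "\<And>\<tau>. \<tau> \<le> T \<Longrightarrow> \<bar>w \<tau>\<bar> \<le> W \<and> \<bar>w' \<tau>\<bar> \<le> S"
    and \<xi>: "0 < \<xi>" "\<xi> < t 1"
    and j: "j < m" and x: "\<xi> \<le> x" "x \<le> exp T" "x \<le> t (Suc j)"
  shows "ef_energy ef_b q (w (ln x)) (w' (ln x))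
      \<le> ef_energy ef_b q (w (ln \<xi>)) (w' (ln \<xi>)) + 2 * (real j + 1) * (- ef_a * S * W)"
  using j x
proof (induction j arbitrary: x)
  case 0
  have "ln x \<le> T" using 0 \<xi> by (metis exp_le_cancel_iff exp_ln less_le_trans)
  moreover have "x < 1" using 0 T exp_less_one_iff[of T] by linarith
  ultimately have "ef_energy ef_b q (w (ln x)) (w' (ln x)) - ef_energy ef_b q (w (ln \<xi>)) (w' (ln \<xi>))
      \<le> 2 * (- ef_a) * S * W"
    using 0 \<xi> bound m_pos by (intro energy_w_increment_in_zone) (auto simp: t_0)
  then show ?case by (simp add: algebra_simps)
next
  case (Suc j)
  have "W \<ge> 0" "S \<ge> 0" using bound[of T] by auto
  then have growth: "- ef_a * S * W \<ge> 0" using ef_a_neg by (simp add: mult_nonpos_nonneg)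
  show ?case
  proof (cases "x \<le> t (Suc j)")
    case True
    then have "ef_energy ef_b q (w (ln x)) (w' (ln x))
        \<le> ef_energy ef_b q (w (ln \<xi>)) (w' (ln \<xi>)) + 2 * (real j + 1) * (- ef_a * S * W)"
      using Suc by simp
    also have "\<dots> \<le> ef_energy ef_b q (w (ln \<xi>)) (w' (ln \<xi>)) + 2 * (real (Suc j) + 1) * (- ef_a * S * W)"
      using growth by (intro add_left_mono mult_right_mono) auto
    finally show ?thesis .
  next
    case False
    have "t 1 \<le> t (Suc j)" by (rule t_mono) simp
    then have ih: "ef_energy ef_b q (w (ln (t (Suc j)))) (w' (ln (t (Suc j))))
        \<le> ef_energy ef_b q (w (ln \<xi>)) (w' (ln \<xi>)) + 2 * (real j + 1) * (- ef_a * S * W)"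
      using Suc \<xi> False by auto
    have "ln x \<le> T" using Suc \<xi> by (metis exp_le_cancel_iff exp_ln less_le_trans)
    moreover have "x < 1" using Suc T exp_less_one_iff[of T] by linarith
    ultimately have "ef_energy ef_b q (w (ln x)) (w' (ln x))
        - ef_energy ef_b q (w (ln (t (Suc j)))) (w' (ln (t (Suc j)))) \<le> 2 * (- ef_a) * S * W"
      using Suc False t_pos[of "Suc j"] bound by (intro energy_w_increment_in_zone) auto
    then show ?thesis using ih by (simp add: algebra_simps)
  qed
qed

text \<open>The energy at \<open>T\<close> bounds \<open>\<bar>w\<bar>\<close> and \<open>\<bar>w'\<bar>\<close> on \<open>(-\<infinity>, T]\<close>, and these bound the growth of the
  energy over the \<open>m\<close> zones up to \<open>T\<close>; for small damping \<open>- ef_a\<close> the estimate closes.\<close>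

lemma energy_w_le_4:
  assumes small: "- ef_a * m * growth_const M \<le> 1 / 2" "- ef_a * m * (b_high M + 1) * amp_const M \<le> 1"
    and T: "T < 0"
  shows "ef_energy ef_b q (w T) (w' T) \<le> 4"
proof -
  interpret P: emden_fowler_nonneg_energy ef_a ef_b q w w' "{..<0}" by (rule emden_fowler_nonneg_energy_w)
  define \<Phi> where "\<Phi> = ef_energy ef_b q (w T) (w' T)"
  define W where "W = sqrt (amp_const M + 2 * (q_crit M + 2) * \<Phi>)"
  define S where "S = sqrt (2 * \<Phi> + b_high M * (amp_const M + 2 * (q_crit M + 2) * \<Phi>))"
  have \<Phi>: "\<Phi> \<ge> 0" unfolding \<Phi>_def using P.energy_nonneg T by auto
  have "amp_const M + 2 * (q_crit M + 2) * \<Phi> \<ge> 0"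
    using \<Phi> amp_const_ge_1[OF M_gt_2] consts_pos by simp
  then have W2: "W\<^sup>2 = amp_const M + 2 * (q_crit M + 2) * \<Phi>"
    unfolding W_def by (rule real_sqrt_pow2)
  have "2 * \<Phi> + b_high M * W\<^sup>2 \<ge> 0" using \<Phi> consts_pos by simp
  then have S2: "S\<^sup>2 = 2 * \<Phi> + b_high M * W\<^sup>2"
    unfolding S_def W2[symmetric] by (rule real_sqrt_pow2)
  have bound: "\<bar>w \<tau>\<bar> \<le> W \<and> \<bar>w' \<tau>\<bar> \<le> S" if "\<tau> \<le> T" for \<tau>
  proof -
    have "ef_energy ef_b q (w \<tau>) (w' \<tau>) \<le> \<Phi>" unfolding \<Phi>_def using that T by (intro P.energy_mono) auto
    from real_sqrt_le_mono[OF w_sq_le[OF this \<Phi>]] real_sqrt_le_mono[OF w'_sq_le[OF this \<Phi>]]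
    show ?thesis unfolding W_def S_def by simp
  qed
  obtain \<xi> where \<xi>: "0 < \<xi>" "\<xi> < t 1" "\<xi> < exp T" "ef_energy ef_b q (w (ln \<xi>)) (w' (ln \<xi>)) \<le> 1"
    using energy_w_small_near_origin[OF T] by blast
  have "ef_energy ef_b q (w (ln (exp T))) (w' (ln (exp T)))
      \<le> ef_energy ef_b q (w (ln \<xi>)) (w' (ln \<xi>)) + 2 * (real (m - 1) + 1) * (- ef_a * S * W)"
    by (rule energy_w_increment_across_zones[OF T bound \<xi>(1,2)]) (use \<xi> m_pos t_ge_m[of m] T in auto)
  then have "\<Phi> \<le> 1 + 2 * real m * (- ef_a * S * W)" using \<xi>(4) m_pos by (simp add: \<Phi>_def of_nat_diff)
  moreover have "2 * S * W \<le> S\<^sup>2 + W\<^sup>2" by (rule sum_squares_bound)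
  then have "real m * (- ef_a) * (2 * S * W) \<le> real m * (- ef_a) * (S\<^sup>2 + W\<^sup>2)"
    using ef_a_neg by (intro mult_left_mono) (auto simp: mult_nonneg_nonpos)
  moreover have "S\<^sup>2 + W\<^sup>2 = (b_high M + 1) * amp_const M + growth_const M * \<Phi>"
    unfolding S2 W2 growth_const_def by (simp add: algebra_simps)
  ultimately have "\<Phi> \<le> 1 + - ef_a * m * (b_high M + 1) * amp_const M + (- ef_a * m * growth_const M) * \<Phi>"
    by (simp add: algebra_simps)
  moreover have "(- ef_a * m * growth_const M) * \<Phi> \<le> 1 / 2 * \<Phi>" using small \<Phi> by (intro mult_right_mono) auto
  ultimately show ?thesis using small unfolding \<Phi>_def by linarith
qed

end

section \<open>Decay away from the peaks\<close>

text \<open>Constants of the bounded-duration argument: \<open>peak_const\<close> bounds \<open>\<rho>\<^sub>j Mtil\<^sub>j\<close>. On an arc of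
  \<open>w\<close> inside one zone with both ends above \<open>level_const M \<gamma>\<close>, \<open>speed_const\<close> bounds \<open>\<bar>w'\<bar>\<close>,
  \<open>speed_sq_const\<close> and \<open>decel_const\<close> are the parameters \<open>h\<close>, \<open>c\<^sub>0\<close> of \<open>positive_arc_duration\<close>,
  and the arc lasts at most \<open>duration_const M \<gamma>\<close> in \<open>ln r\<close>.\<close>

definition speed_const :: "real \<Rightarrow> real" where
  "speed_const M = sqrt (8 + b_high M * (amp_const M + 8 * (q_crit M + 2)))"
definition peak_const :: "real \<Rightarrow> real" where
  "peak_const M = max 1 (4 * (q_crit M + 2))"
definition level_const :: "real \<Rightarrow> real \<Rightarrow> real" where
  "level_const M \<gamma> = min (\<gamma> powr (1 / q_low M)) ((1 / 2) powr (2 / q_low M) / 2)"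
definition top_level_const :: "real \<Rightarrow> real" where
  "top_level_const M = (max 1 (b_high M * (1 + q_crit M / 4))) powr (1 / q_low M)"
definition speed_sq_const :: "real \<Rightarrow> real \<Rightarrow> real" where
  "speed_sq_const M \<gamma> = (level_const M \<gamma>)\<^sup>2 * b_low M * q_low M / (2 * (q_crit M + 2))"
definition decel_const :: "real \<Rightarrow> real \<Rightarrow> real" where
  "decel_const M \<gamma> = level_const M \<gamma> * b_low M * q_low M / 4"
definition duration_const :: "real \<Rightarrow> real \<Rightarrow> real" where
  "duration_const M \<gamma> =
     2 * (top_level_const M / sqrt (speed_sq_const M \<gamma>) + 1 + 4 * speed_const M / decel_const M \<gamma>)"
definition K_const :: "real \<Rightarrow> real \<Rightarrow> real" where
  "K_const M \<gamma> = max (peak_const M + 1) ((peak_const M + 1 / 2) * exp (duration_const M \<gamma>) + 1)"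

context radial_solution
begin

lemma ef_level_le_top_level_const: "ef_level ef_b q \<le> top_level_const M"
proof -
  have "ef_b * (1 + q / 4) \<le> b_high M * (1 + q_crit M / 4)"
    using ef_b_le ef_b_pos q_less_q_crit q_pos by (intro mult_mono) auto
  then have "(ef_b * (1 + q / 4)) powr (1 / q) \<le> (max 1 (b_high M * (1 + q_crit M / 4))) powr (1 / q)"
    using ef_b_pos q_pos by (intro powr_mono2) auto
  also have "\<dots> \<le> (max 1 (b_high M * (1 + q_crit M / 4))) powr (1 / q_low M)"
    using q_ge_q_low consts_pos by (intro powr_mono) (auto simp: divide_left_mono)
  finally show ?thesis by (simp add: ef_level_def top_level_const_def)
qed

lemma abs_w_ln_rho_powr:
  assumes j: "j < m" and pos: "rho j > 0"
  shows "\<bar>w (ln (rho j))\<bar> powr (q / 2) = rho j * MT j"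
proof -
  have "\<bar>w (ln (rho j))\<bar> = rho j powr beta * ML j" using pos Mloc_eq_rho[OF j] by (simp add: w_ln abs_mult)
  moreover have "(rho j powr beta) powr (q / 2) = rho j"
    using pos beta_mult_q by (simp add: powr_powr)
  ultimately show ?thesis using pos Mloc_pos[OF j] by (simp add: powr_mult Mtil_eq)
qed

lemma w_large_if_weighted_large:
  assumes r: "0 < r" and \<gamma>: "0 < \<gamma>" "\<gamma> \<le> 1" and large: "r\<^sup>2 * \<bar>v r\<bar> powr q \<ge> \<gamma>"
  shows "\<gamma> powr (1 / q_low M) \<le> \<bar>w (ln r)\<bar>"
proof -
  have "\<bar>w (ln r)\<bar> = (\<bar>w (ln r)\<bar> powr q) powr (1 / q)" using q_pos by (simp add: powr_powr)
  also have "\<dots> \<ge> \<gamma> powr (1 / q)"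
    using abs_w_ln_powr[OF r] large \<gamma> q_pos by (intro powr_mono2) auto
  finally have "\<bar>w (ln r)\<bar> \<ge> \<gamma> powr (1 / q)" .
  moreover have "\<gamma> powr (1 / q_low M) \<le> \<gamma> powr (1 / q)"
    using q_ge_q_low consts_pos(2) \<gamma> q_pos by (intro powr_mono' divide_left_mono) auto
  ultimately show ?thesis by linarith
qed

lemma weighted_le_in_own_zone:
  assumes j: "j < m" "t j \<le> r" "r \<le> t (Suc j)" and r: "0 \<le> r"
  shows "r\<^sup>2 * \<bar>v r\<bar> powr q \<le> (r * MT j)\<^sup>2"
proof -
  have "\<bar>v r\<bar> \<le> ML j" using rho(2)[OF j(1), of r] j Mloc_eq_rho[OF j(1)] by auto
  then have "\<bar>v r\<bar> powr q \<le> ML j powr q" using q_pos by (intro powr_mono2) auto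
  also have "\<dots> = (MT j)\<^sup>2"
  proof -
    have "(MT j)\<^sup>2 = (ML j powr (q / 2)) powr 2"
      unfolding Mtil_eq using Mloc_pos[OF j(1)] by (simp add: powr_numeral)
    also have "\<dots> = ML j powr (q / 2 * 2)" by (simp only: powr_powr)
    also have "q / 2 * 2 = q" by simp
    finally show ?thesis by (rule sym)
  qed
  finally show ?thesis by (simp add: power_mult_distrib mult_left_mono)
qed

lemma Mtil_scale_gt:
  assumes "j \<le> k" "k < m" "K / MT k < r" "0 < r"
  shows "r * MT j > K"
proof -
  have "K < r * MT k" using assms(3) Mtil_pos[OF assms(2)] by (simp add: field_simps)
  also have "\<dots> \<le> r * MT j" using Mtil_antimono[OF assms(1,2)] assms(4) by simp
  finally show ?thesis .
qed

context
  assumes small: "- ef_a * m * growth_const M \<le> 1 / 2" "- ef_a * m * (b_high M + 1) * amp_const M \<le> 1"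
begin

lemma abs_w'_le_speed_const:
  assumes "\<tau> < 0"
  shows "\<bar>w' \<tau>\<bar> \<le> speed_const M"
proof -
  have "(w' \<tau>)\<^sup>2 \<le> 2 * 4 + b_high M * (amp_const M + 2 * (q_crit M + 2) * 4)"
    by (rule w'_sq_le[OF energy_w_le_4[OF small assms]]) simp
  then have "sqrt ((w' \<tau>)\<^sup>2) \<le> speed_const M"
    unfolding speed_const_def by (intro real_sqrt_le_mono) simp
  then show ?thesis by simp
qed

text \<open>At a peak \<open>\<rho>\<^sub>j > 0\<close> we have \<open>v' = 0\<close>, so \<open>w' = \<beta> w\<close> and the energy bound controls
  \<open>\<bar>w\<bar>\<^sup>q\<^sup> / \<^sup>2 = \<rho>\<^sub>j Mtil\<^sub>j\<close>.\<close>

lemma rho_Mtil_le: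
  assumes j: "j < m"
  shows "rho j * MT j \<le> peak_const M"
proof (cases "rho j = 0")
  case True
  then show ?thesis by (simp add: peak_const_def)
next
  case False
  then have pos: "rho j > 0" using rho_nonneg[OF j] by simp
  define \<sigma> where "\<sigma> = ln (rho j)"
  have "rho j < 1" using rho_zero_or_inside[OF j] pos t_in_unit[of "Suc j"] by auto
  then have F: "ef_energy ef_b q (w \<sigma>) (w' \<sigma>) \<le> 4"
    using pos by (intro energy_w_le_4[OF small]) (simp add: \<sigma>_def)
  have "beta\<^sup>2 - ef_b = beta * (2 * beta - (M - 2))" by (simp add: ef_b_def power2_eq_square algebra_simps)
  also have "\<dots> \<ge> 0" using beta_pos beta_gt by (intro mult_nonneg_nonneg) auto
  finally have "ef_b \<le> beta\<^sup>2" by simp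
  moreover have "w' \<sigma> = beta * w \<sigma>" using w'_ln[OF pos] deriv_v_rho[OF j pos] by (simp add: \<sigma>_def)
  ultimately have "ef_energy ef_b q (w \<sigma>) (w' \<sigma>) \<ge> \<bar>w \<sigma>\<bar> powr (q + 2) / (q + 2)"
    unfolding ef_energy_def by (simp add: power_mult_distrib mult_right_mono)
  then have "\<bar>w \<sigma>\<bar> powr (q + 2) / (q + 2) \<le> 4" using F by linarith
  then have A: "\<bar>w \<sigma>\<bar> powr (q + 2) \<le> 4 * (q + 2)" using q_pos by (simp add: divide_le_eq)
  have "\<bar>w \<sigma>\<bar> powr (q / 2) \<le> peak_const M"
  proof (cases "\<bar>w \<sigma>\<bar> \<le> 1")
    case True
    then have "\<bar>w \<sigma>\<bar> powr (q / 2) \<le> 1" using q_pos powr_mono2[of "q / 2" "\<bar>w \<sigma>\<bar>" 1] by simp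
    then show ?thesis by (simp add: peak_const_def)
  next
    case False
    then have "\<bar>w \<sigma>\<bar> powr (q / 2) \<le> \<bar>w \<sigma>\<bar> powr (q + 2)" using q_pos by (intro powr_mono) auto
    also have "\<dots> \<le> 4 * (q_crit M + 2)" using A q_less_q_crit by simp
    finally show ?thesis by (simp add: peak_const_def)
  qed
  then show ?thesis using abs_w_ln_rho_powr[OF j pos] by (simp add: \<sigma>_def)
qed

text \<open>Half a scale \<open>1 / Mtil\<^sub>j\<close> after the peak \<open>\<rho>\<^sub>j\<close>, \<open>\<bar>v\<bar>\<close> is still at least \<open>Mloc\<^sub>j / 2\<close>.\<close>

lemma w_large_after_peak:
  assumes j: "j < m" and r: "t j < r" "r < t (Suc j)" and far: "r * MT j > peak_const M + 1"
  obtains s where "t j < s" "s \<le> r" "s * MT j \<le> peak_const M + 1 / 2"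
    "(1 / 2) powr (2 / q_low M) / 2 \<le> \<bar>w (ln s)\<bar>"
proof -
  define s where "s = rho j + 1 / (2 * MT j)"
  have MT: "MT j > 0" using Mtil_pos[OF j] .
  have peak: "rho j * MT j \<le> peak_const M" by (rule rho_Mtil_le[OF j])
  have sMT: "s * MT j = rho j * MT j + 1 / 2" using MT by (simp add: s_def field_simps)
  then have "s * MT j < r * MT j" using peak far by linarith
  then have "s < r" using MT by simp
  have s_pos: "s > rho j" using MT by (simp add: s_def)
  then have "t j < s" "0 < s" using rho(1)[OF j] rho_nonneg[OF j] by auto
  have "\<bar>v s\<bar> \<ge> ML j - (s - rho j) * (ML j * MT j)"
    using abs_v_ge_after_peak[OF j] s_pos \<open>s < r\<close> r t_in_unit[of "Suc j"] by simp
  then have vs: "\<bar>v s\<bar> \<ge> ML j / 2" using MT by (simp add: s_def field_simps)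
  have "(s - rho j) powr beta \<le> s powr beta"
    using s_pos rho_nonneg[OF j] beta_pos by (intro powr_mono2) auto
  moreover have "(s - rho j) powr beta * ML j = (1 / 2) powr beta"
  proof -
    have "MT j powr beta = ML j" using Mloc_pos[OF j] beta_mult_q by (simp add: Mtil_eq powr_powr mult.commute)
    then show ?thesis using MT Mloc_pos[OF j] by (simp add: s_def powr_divide powr_mult field_simps)
  qed
  ultimately have "(1 / 2) powr beta / 2 \<le> s powr beta * \<bar>v s\<bar>"
    using vs Mloc_pos[OF j] mult_mono[of "(s - rho j) powr beta" "s powr beta" "ML j / 2" "\<bar>v s\<bar>"]
    by simp
  moreover have "(1 / 2::real) powr (2 / q_low M) \<le> (1 / 2) powr beta"
    unfolding beta_def using q_ge_q_low consts_pos(2) q_pos by (intro powr_mono' divide_left_mono) auto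
  moreover have "\<bar>w (ln s)\<bar> = s powr beta * \<bar>v s\<bar>" using \<open>0 < s\<close> by (simp add: w_ln abs_mult)
  ultimately have "(1 / 2) powr (2 / q_low M) / 2 \<le> \<bar>w (ln s)\<bar>" by simp
  moreover have "s * MT j \<le> peak_const M + 1 / 2" using sMT peak by simp
  ultimately show ?thesis using that \<open>t j < s\<close> \<open>s < r\<close> by simp
qed

context
  fixes \<gamma> :: real
  assumes \<gamma>: "0 < \<gamma>" and damping_le_decel: "- ef_a * speed_const M \<le> decel_const M \<gamma> / 2"
begin

lemma level_const_pos: "level_const M \<gamma> > 0"
  using \<gamma> by (simp add: level_const_def)

lemma decel_const_pos: "decel_const M \<gamma> > 0"
  using level_const_pos consts_pos by (simp add: decel_const_def)

lemma decel_const_le: "decel_const M \<gamma> \<le> level_const M \<gamma> * ef_b * q / 4"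
proof -
  have "level_const M \<gamma> * b_low M * q_low M \<le> level_const M \<gamma> * ef_b * q"
    using level_const_pos ef_b_ge consts_pos q_ge_q_low by (intro mult_mono) auto
  then show ?thesis by (simp add: decel_const_def divide_right_mono)
qed

lemma speed_sq_const_pos: "speed_sq_const M \<gamma> > 0"
  using level_const_pos consts_pos by (simp add: speed_sq_const_def)

lemma speed_sq_const_le: "speed_sq_const M \<gamma> \<le> (level_const M \<gamma>)\<^sup>2 * ef_b * q / (2 * (q + 2))"
proof -
  have "(level_const M \<gamma>)\<^sup>2 * b_low M * q_low M \<le> (level_const M \<gamma>)\<^sup>2 * ef_b * q"
    using level_const_pos ef_b_ge consts_pos q_ge_q_low by (intro mult_mono) auto
  moreover have "2 * (q + 2) \<le> 2 * (q_crit M + 2)" using q_less_q_crit by simp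
  ultimately show ?thesis
    unfolding speed_sq_const_def using q_pos level_const_pos ef_b_pos
    by (intro frac_le) (auto intro!: mult_nonneg_nonneg)
qed

lemma log_length_of_high_arc_le:
  assumes j: "j < m" and sr: "t j < s" "s \<le> r" "r < t (Suc j)"
    and high: "level_const M \<gamma> \<le> \<bar>w (ln s)\<bar>" "level_const M \<gamma> \<le> \<bar>w (ln r)\<bar>"
  shows "ln r - ln s \<le> duration_const M \<gamma>"
proof -
  obtain y y' where Y: "emden_fowler_nonneg_energy ef_a ef_b q y y' {..<0}"
    and abs_y: "\<And>\<tau>. \<bar>y \<tau>\<bar> = \<bar>w \<tau>\<bar>" "\<And>\<tau>. \<bar>y' \<tau>\<bar> = \<bar>w' \<tau>\<bar>"
    and "\<And>\<tau>. ef_energy ef_b q (y \<tau>) (y' \<tau>) = ef_energy ef_b q (w \<tau>) (w' \<tau>)"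
    and pos: "\<And>x. t j < x \<Longrightarrow> x < t (Suc j) \<Longrightarrow> y (ln x) > 0"
    using zone_sign_normalised[OF j] by blast
  interpret Y: emden_fowler_nonneg_energy ef_a ef_b q y y' "{..<0}" by (rule Y)
  let ?\<eta> = "level_const M \<gamma>"
  have s0: "0 < s" using sr t_in_unit[of j] by simp
  have r0: "0 < r" "r < 1" using sr s0 t_in_unit[of "Suc j"] by linarith+
  then have "ln r < 0" by simp
  then have sub: "{ln s..ln r} \<subseteq> {..<0}" by (auto intro: le_less_trans)
  have lsr: "ln s \<le> ln r" using sr s0 by simp
  have ypos: "y \<tau> > 0" if "ln s \<le> \<tau>" "\<tau> \<le> ln r" for \<tau>
  proof -
    have "exp (ln s) \<le> exp \<tau>" "exp \<tau> \<le> exp (ln r)" using that by simp_all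
    then have "s \<le> exp \<tau>" "exp \<tau> \<le> r" using s0 r0 by simp_all
    then show ?thesis using pos[of "exp \<tau>"] sr by simp
  qed
  have above: "y \<tau> \<ge> ?\<eta>" if "\<tau> \<in> {ln s..ln r}" for \<tau>
  proof -
    have "y \<tau> \<ge> min (y (ln s)) (y (ln r))"
      by (rule Y.positive_arc_ge_min[OF sub]) (use ypos that in auto)
    then show ?thesis using high abs_y(1)[of "ln s"] abs_y(1)[of "ln r"] ypos[of "ln s"] ypos[of "ln r"] lsr
      by auto
  qed
  have speed: "\<bar>y' \<tau>\<bar> \<le> speed_const M" if "\<tau> \<in> {ln s..ln r}" for \<tau>
    using abs_y(2)[of \<tau>] abs_w'_le_speed_const[of \<tau>] that sub by auto
  have "ln r - ln s \<le> 2 * (ef_level ef_b q / sqrt (speed_sq_const M \<gamma>) + 1 + 4 * speed_const M / decel_const M \<gamma>)"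
    by (rule Y.positive_arc_duration[OF lsr sub level_const_pos above speed decel_const_pos
          decel_const_le damping_le_decel speed_sq_const_pos speed_sq_const_le])
  also have "\<dots> \<le> duration_const M \<gamma>"
    unfolding duration_const_def using ef_level_le_top_level_const speed_sq_const_pos
    by (simp add: divide_right_mono)
  finally show ?thesis .
qed

text \<open>Far beyond the peak of its zone, \<open>r\<close> would lie at the end of an arc of \<open>w\<close> that is high
  at both ends but longer than \<open>duration_const M \<gamma>\<close>.\<close>

lemma weighted_small_far_from_peak:
  assumes \<gamma>1: "\<gamma> \<le> 1" and j: "j < m" and r: "t j < r" "r < t (Suc j)"
    and K: "K \<ge> K_const M \<gamma>" and far: "r * MT j > K"
  shows "r\<^sup>2 * \<bar>v r\<bar> powr q < \<gamma>"
proof (rule ccontr)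
  assume "\<not> ?thesis"
  then have large: "r\<^sup>2 * \<bar>v r\<bar> powr q \<ge> \<gamma>" by simp
  have r0: "0 < r" using r t_in_unit[of j] by simp
  have "r * MT j > peak_const M + 1" using far K by (simp add: K_const_def)
  then obtain s where s: "t j < s" "s \<le> r" "s * MT j \<le> peak_const M + 1 / 2"
      "(1 / 2) powr (2 / q_low M) / 2 \<le> \<bar>w (ln s)\<bar>"
    using w_large_after_peak[OF j r] by blast
  have "level_const M \<gamma> \<le> \<bar>w (ln s)\<bar>" "level_const M \<gamma> \<le> \<bar>w (ln r)\<bar>"
    using s(4) w_large_if_weighted_large[OF r0 \<gamma> \<gamma>1 large] by (auto simp: level_const_def)
  then have "ln r - ln s \<le> duration_const M \<gamma>" using log_length_of_high_arc_le[OF j s(1,2) r(2)] by simp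
  then have "exp (ln r) \<le> exp (ln s + duration_const M \<gamma>)" by simp
  moreover have "0 < s" using r0 s(1) t_in_unit[of j] by simp
  ultimately have "r \<le> s * exp (duration_const M \<gamma>)" using r0 by (simp add: exp_add)
  then have "r * MT j \<le> (s * MT j) * exp (duration_const M \<gamma>)"
    using Mtil_pos[OF j] by (simp add: mult_right_mono algebra_simps)
  also have "\<dots> \<le> (peak_const M + 1 / 2) * exp (duration_const M \<gamma>)"
    using s(3) by (intro mult_right_mono) auto
  also have "\<dots> < K" using K by (simp add: K_const_def)
  finally show False using far by simp
qed

lemma weighted_on_Gset_le:
  assumes \<gamma>1: "\<gamma> \<le> 1" and K: "K \<ge> K_const M \<gamma>" "K \<ge> 1"
    and i: "i \<in> {1..m}" and r: "r \<in> Gset p v m K i"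
  shows "r\<^sup>2 * \<bar>v r\<bar> powr q \<le> max (1 / K\<^sup>2) \<gamma>"
proof (cases "v r = 0")
  case False
  have r01: "0 < r" "r < 1" using r by (auto simp: Gset_def split: if_splits)
  obtain j where j: "j < m" "t j \<le> r" "r \<le> t (Suc j)" using zone_containing[OF r01] by blast
  then have jr: "t j < r" "r < t (Suc j)" using zone_boundary_or_inside[OF j r01(1)] False by auto
  have far: ?thesis if "r * MT j > K"
    using weighted_small_far_from_peak[OF \<gamma>1 j(1) jr K(1) that] by simp
  show ?thesis
  proof (cases "i < m")
    case True
    then have G: "K / MT (i - 1) < r" "r * MT i < 1 / K"
      using r Mtil_pos[OF True] K(2) by (auto simp: Gset_def field_simps)
    consider "j < i" | "j = i" | "i < j" by linarith
    then show ?thesis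
    proof cases
      case 1
      then show ?thesis using far Mtil_scale_gt[OF _ _ G(1) r01(1), of j] True by simp
    next
      case 2
      have "(r * MT i)\<^sup>2 \<le> (1 / K)\<^sup>2"
        using G(2) r01 Mtil_pos[OF True] by (intro power_mono) auto
      then show ?thesis using weighted_le_in_own_zone[OF j] r01 2 by (simp add: power_divide)
    next
      case 3
      have "t (Suc i) \<le> t j" using 3 by (intro t_mono) simp
      then have "t (Suc i) * MT i < r * MT i" using jr Mtil_pos[OF True] by simp
      moreover have "t (Suc i) * MT i \<ge> 1" using t_Suc_Mtil_ge_1[of i] 3 j(1) by simp
      ultimately show ?thesis using G(2) K(2) by (smt (verit) divide_le_eq_1)
    qed
  next
    case False
    then have "i = m" using i by simp
    then have "K / MT (m - 1) < r" using r by (auto simp: Gset_def)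
    then show ?thesis using far Mtil_scale_gt[of j "m - 1"] j(1) m_pos r01 by simp
  qed
qed (use \<gamma> in auto)

end

end

end

definition damping_bound :: "real \<Rightarrow> nat \<Rightarrow> real \<Rightarrow> real" where
  "damping_bound M m \<gamma> = min (min (1 / (2 * real m * growth_const M)) (1 / (real m * (b_high M + 1) * amp_const M)))
     (decel_const M \<gamma> / (2 * speed_const M))"

lemma damping_bound_pos:
  assumes "M > 2" "m \<ge> 1" "\<gamma> > 0"
  shows "damping_bound M m \<gamma> > 0"
proof -
  note exponent_consts_pos[OF assms(1)] amp_const_ge_1[OF assms(1)]
  moreover have "level_const M \<gamma> > 0" using assms by (simp add: level_const_def)
  ultimately show ?thesis using assms
    by (auto simp: damping_bound_def growth_const_def speed_const_def decel_const_def add_pos_nonneg)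
qed

lemma exponent_threshold_less_pM:
  assumes "M > 2" "\<alpha> > 0"
  shows "1 + max (q_low M) (4 / (M - 2 + \<alpha>)) < pM M"
proof -
  have "pM M = 1 + q_crit M" using assms by (simp add: pM_def q_crit_def field_simps)
  moreover have "q_low M < q_crit M" using assms by (simp add: q_low_def q_crit_def field_simps)
  moreover have "4 / (M - 2 + \<alpha>) < q_crit M"
    unfolding q_crit_def using assms by (intro divide_strict_left_mono) auto
  ultimately show ?thesis by simp
qed

lemma max_bound_less:
  fixes \<epsilon> p P K :: real
  assumes "\<epsilon> > 0" "0 < p" "p < P" "K \<ge> 1" "K > 2 * P / \<epsilon>"
  shows "max (p / K\<^sup>2) (p * min (1 / 2) (\<epsilon> / (2 * P))) < \<epsilon>"
proof -
  have "K \<le> K\<^sup>2" using assms by (simp add: power2_eq_square)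
  then have "2 * P / \<epsilon> < K\<^sup>2" using assms by linarith
  then have "2 * P < \<epsilon> * K\<^sup>2" using assms by (simp add: field_simps)
  then have "p / K\<^sup>2 < \<epsilon>" using assms by (simp add: field_simps)
  moreover have "p * min (1 / 2) (\<epsilon> / (2 * P)) \<le> P * (\<epsilon> / (2 * P))"
    using assms by (intro mult_mono) auto
  then have "p * min (1 / 2) (\<epsilon> / (2 * P)) < \<epsilon>" using assms by simp
  ultimately show ?thesis by simp
qed

context radial_solution
begin

lemma damping_le_if_exponent_close:
  assumes "\<alpha> > 0" "1 + max (q_low M) (4 / (M - 2 + \<alpha>)) < p"
  shows "- ef_a \<le> \<alpha>"
proof -
  have "4 / (M - 2 + \<alpha>) < q" using assms(2) max.cobounded2[of "q_low M"] by linarith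
  then have "4 < (M - 2 + \<alpha>) * q" using assms(1) M_gt_2 by (simp add: field_simps)
  then have "4 / q < M - 2 + \<alpha>" using q_pos by (simp add: field_simps)
  then show ?thesis by (simp add: ef_a_def beta_def)
qed

lemma Gset_bound_if_damping_small:
  assumes small: "- ef_a \<le> damping_bound M m \<gamma>" and \<gamma>: "0 < \<gamma>" "\<gamma> \<le> 1"
    and K: "K \<ge> K_const M \<gamma>" "K \<ge> 1" and r: "r \<in> (\<Union>i\<in>{1..m}. Gset p v m K i)"
  shows "p * r\<^sup>2 * \<bar>v r\<bar> powr (p - 1) \<le> max (p / K\<^sup>2) (p * \<gamma>)"
proof -
  have mp: "real m > 0" using m_pos by simp
  have pos: "growth_const M > 0" "b_high M + 1 > 0" "amp_const M > 0" "speed_const M > 0"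
    using consts_pos amp_const_ge_1[OF M_gt_2]
    by (auto simp: growth_const_def speed_const_def add_pos_nonneg)
  have "- ef_a * (m * growth_const M) \<le> 1 / (2 * m * growth_const M) * (m * growth_const M)"
    using small mp pos ef_a_neg unfolding damping_bound_def by (intro mult_right_mono) auto
  then have s1: "- ef_a * m * growth_const M \<le> 1 / 2" using mp pos by (simp add: mult.assoc)
  have "- ef_a * (m * (b_high M + 1) * amp_const M) \<le>
      1 / (m * (b_high M + 1) * amp_const M) * (m * (b_high M + 1) * amp_const M)"
    using small mp pos unfolding damping_bound_def by (intro mult_right_mono) auto
  then have s2: "- ef_a * m * (b_high M + 1) * amp_const M \<le> 1" using mp pos by (simp add: mult.assoc)
  have "- ef_a * speed_const M \<le> decel_const M \<gamma> / (2 * speed_const M) * speed_const M"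
    using small pos unfolding damping_bound_def by (intro mult_right_mono) auto
  then have s3: "- ef_a * speed_const M \<le> decel_const M \<gamma> / 2" using pos by simp
  from r obtain i where "i \<in> {1..m}" "r \<in> Gset p v m K i" by blast
  then have "r\<^sup>2 * \<bar>v r\<bar> powr q \<le> max (1 / K\<^sup>2) \<gamma>"
    using weighted_on_Gset_le[OF s1 s2 \<gamma>(1) s3 \<gamma>(2) K] by blast
  then have "p * (r\<^sup>2 * \<bar>v r\<bar> powr q) \<le> p * max (1 / K\<^sup>2) \<gamma>"
    using q_pos by (intro mult_left_mono) auto
  then show ?thesis using q_pos by (simp add: max_mult_distrib_left mult.assoc)
qed

end

theorem lemma2p14:
  fixes M :: real and m :: nat and v :: "real \<Rightarrow> real \<Rightarrow> real"
  assumes "M > 2" and "m \<ge> 1"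
    and "\<And>p. 1 < p \<Longrightarrow> p < pM M \<Longrightarrow>
           radial_sol M p (v p) \<and> nodal_zones (v p) m \<and> v p 0 > 0"
  shows "\<forall>\<epsilon>>0. \<exists>Kb>0. \<exists>pb<pM M. \<forall>K>Kb. \<forall>p. 1 < p \<and> pb < p \<and> p < pM M \<longrightarrow>
           (\<exists>c<\<epsilon>. \<forall>r\<in>(\<Union>i\<in>{1..m}. Gset p (v p) m K i).
              p * r\<^sup>2 * \<bar>v p r\<bar> powr (p - 1) \<le> c)"
proof (intro allI impI)
  fix \<epsilon> :: real assume "\<epsilon> > 0"
  define \<gamma> where "\<gamma> = min (1 / 2) (\<epsilon> / (2 * pM M))"
  define \<alpha> where "\<alpha> = damping_bound M m \<gamma>"
  define pb where "pb = 1 + max (q_low M) (4 / (M - 2 + \<alpha>))"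
  define Kb where "Kb = max (K_const M \<gamma>) (max 1 (2 * pM M / \<epsilon>))"
  have "pM M > 0" using assms(1) by (simp add: pM_def)
  then have \<gamma>: "0 < \<gamma>" "\<gamma> \<le> 1" using \<open>\<epsilon> > 0\<close> by (auto simp: \<gamma>_def)
  have \<alpha>: "\<alpha> > 0" unfolding \<alpha>_def using damping_bound_pos assms(1,2) \<gamma> by blast
  have "\<exists>c<\<epsilon>. \<forall>r\<in>(\<Union>i\<in>{1..m}. Gset p (v p) m K i). p * r\<^sup>2 * \<bar>v p r\<bar> powr (p - 1) \<le> c"
    if K: "K > Kb" and p: "1 < p" "pb < p" "p < pM M" for K p
  proof -
    interpret radial_solution M p m "v p"
      using assms p by unfold_locales (auto simp: pb_def)
    have "- ef_a \<le> \<alpha>" using damping_le_if_exponent_close[OF \<alpha>] p(2) by (simp add: pb_def)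
    then show ?thesis
      using Gset_bound_if_damping_small[of \<gamma> K] max_bound_less[OF \<open>\<epsilon> > 0\<close> _ p(3), of K] \<gamma> K p
      unfolding \<alpha>_def \<gamma>_def Kb_def by (intro exI[of _ "max (p / K\<^sup>2) (p * \<gamma>)"]) (auto simp: \<gamma>_def)
  qed
  then show "\<exists>Kb>0. \<exists>pb<pM M. \<forall>K>Kb. \<forall>p. 1 < p \<and> pb < p \<and> p < pM M \<longrightarrow>
      (\<exists>c<\<epsilon>. \<forall>r\<in>(\<Union>i\<in>{1..m}. Gset p (v p) m K i). p * r\<^sup>2 * \<bar>v p r\<bar> powr (p - 1) \<le> c)"
    using exponent_threshold_less_pM[OF assms(1) \<alpha>] unfolding pb_def[symmetric]
    by (intro exI[of _ Kb] exI[of _ pb]) (auto simp: Kb_def)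
qed

end
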